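(* Let $V$ be a vector space with basis $y_1,\dots,y_n$, let $M$ be an invertible $n\times n$ matrix, let $f=(y_1,\dots,y_n)M(y_1,\dots,y_n)^t\in V\otimes V$ and $A=T(V)/(f)$. Then for any $v\in V$ and $c\in\Bbbk$, the filtered algebra $U=T(V)/(f-v-c)$ is a PBW-deformation of $A$.
   Context: $\Bbbk$ is a field of characteristic zero; $T(V)$ is the tensor algebra, and $(y_1,\dots,y_n)M(y_1,\dots,y_n)^t$ denotes $\sum_{i,j}m_{ij}\,y_i\otimes y_j$ where $M=(m_{ij})$. $U$ is filtered by the images of $\bigoplus_{i\le m}V^{\otimes i}$; it is a PBW-deformation of $A$ if its associated graded algebra is isomorphic to $A$. *)

theory Defs
  imports Main "HOL-Algebra.QuotRing"
begin

text \<open>The tensor algebra T(V) of V = span of y_0,...,y_(n-1) over the field 'k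
  (the paper's y_1,...,y_n, indexed from 0 here): an element is a finitely
  supported coefficient function on words (lists of letters < n); the word
  [i1,...,im] stands for the tensor monomial y_i1 (x) ... (x) y_im.\<close>

type_synonym 'k tens = "nat list \<Rightarrow> 'k"

definition tens_carrier :: "nat \<Rightarrow> 'k::field tens set" where
  "tens_carrier n = {p. finite {w. p w \<noteq> 0} \<and> (\<forall>w. p w \<noteq> 0 \<longrightarrow> set w \<subseteq> {..<n})}"

definition tens_add :: "'k::field tens \<Rightarrow> 'k tens \<Rightarrow> 'k tens" where
  "tens_add p q = (\<lambda>w. p w + q w)"

definition tens_mult :: "'k::field tens \<Rightarrow> 'k tens \<Rightarrow> 'k tens" where
  "tens_mult p q = (\<lambda>w. \<Sum>i\<le>length w. p (take i w) * q (drop i w))"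

definition tens_const :: "'k::field \<Rightarrow> 'k tens" where
  "tens_const c = (\<lambda>w. if w = [] then c else 0)"

definition tens_zero :: "'k::field tens" where
  "tens_zero = (\<lambda>w. 0)"

definition tensor_algebra :: "nat \<Rightarrow> ('k::field tens) ring" where
  "tensor_algebra n = \<lparr>carrier = tens_carrier n, mult = tens_mult,
     one = tens_const 1, zero = tens_zero, add = tens_add\<rparr>"

definition quad_elem :: "nat \<Rightarrow> (nat \<Rightarrow> nat \<Rightarrow> 'k::field) \<Rightarrow> 'k tens" where
  "quad_elem n M = (\<lambda>w. \<Sum>i<n. \<Sum>j<n. if w = [i, j] then M i j else 0)"

definition lin_elem :: "nat \<Rightarrow> (nat \<Rightarrow> 'k::field) \<Rightarrow> 'k tens" where
  "lin_elem n a = (\<lambda>w. \<Sum>i<n. if w = [i] then a i else 0)"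

definition invertible_mat :: "nat \<Rightarrow> (nat \<Rightarrow> nat \<Rightarrow> 'k::field) \<Rightarrow> bool" where
  "invertible_mat n M \<longleftrightarrow> (\<exists>N. \<forall>i<n. \<forall>k<n.
      (\<Sum>j<n. M i j * N j k) = (if i = k then 1 else 0) \<and>
      (\<Sum>j<n. N i j * M j k) = (if i = k then 1 else 0))"

definition filt :: "nat \<Rightarrow> nat \<Rightarrow> 'k::field tens set" where
  "filt n m = {p \<in> tens_carrier n. \<forall>w. p w \<noteq> 0 \<longrightarrow> length w \<le> m}"

definition homog :: "nat \<Rightarrow> nat \<Rightarrow> 'k::field tens set" where
  "homog n m = {p \<in> tens_carrier n. \<forall>w. p w \<noteq> 0 \<longrightarrow> length w = m}"

text \<open>For U = T(V)/I: gr_m U = F_m U / F_(m-1) U, which is realised as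
  cosets x + (F_(m-1) + I) with x in F_m (F_(-1) = 0).\<close>
definition lower :: "nat \<Rightarrow> 'k::field tens set \<Rightarrow> nat \<Rightarrow> 'k tens set" where
  "lower n I m = (if m = 0 then I else {tens_add p q | p q. p \<in> filt n (m - 1) \<and> q \<in> I})"

definition gcoset :: "nat \<Rightarrow> 'k::field tens set \<Rightarrow> nat \<Rightarrow> 'k tens \<Rightarrow> 'k tens set" where
  "gcoset n I m x = {tens_add x z | z. z \<in> lower n I m}"

definition grrep :: "nat \<Rightarrow> nat \<Rightarrow> 'k::field tens set \<Rightarrow> 'k tens" where
  "grrep n m X = (SOME x. x \<in> filt n m \<and> x \<in> X)"

text \<open>The associated graded algebra gr U = (+)_m gr_m U: an element is a
  family of homogeneous components, almost all zero.\<close>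
definition assoc_graded :: "nat \<Rightarrow> 'k::field tens set \<Rightarrow> (nat \<Rightarrow> 'k tens set) ring" where
  "assoc_graded n I = \<lparr>
     carrier = {d. (\<forall>m. \<exists>x \<in> filt n m. d m = gcoset n I m x) \<and>
                   finite {m. d m \<noteq> lower n I m}},
     mult = (\<lambda>d e m. gcoset n I m
              (\<lambda>w. \<Sum>i\<le>m. tens_mult (grrep n i (d i)) (grrep n (m - i) (e (m - i))) w)),
     one = (\<lambda>m. gcoset n I m (if m = 0 then tens_const 1 else tens_zero)),
     zero = (\<lambda>m. lower n I m),
     add = (\<lambda>d e m. gcoset n I m (tens_add (grrep n m (d m)) (grrep n m (e m))))\<rparr>"

definition gr_scalar :: "nat \<Rightarrow> 'k::field tens set \<Rightarrow> 'k \<Rightarrow> (nat \<Rightarrow> 'k tens set)" where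
  "gr_scalar n I c = (\<lambda>m. gcoset n I m (if m = 0 then tens_const c else tens_zero))"

definition gr_degree :: "nat \<Rightarrow> 'k::field tens set \<Rightarrow> nat \<Rightarrow> (nat \<Rightarrow> 'k tens set) set" where
  "gr_degree n I m = {d \<in> carrier (assoc_graded n I). \<forall>j. j \<noteq> m \<longrightarrow> d j = lower n I j}"

text \<open>U = T(V)/(g) (filtered) is a PBW-deformation of A = T(V)/(f) (graded):
  gr U is isomorphic to A as graded 'k-algebras.\<close>
definition PBW_deformation :: "nat \<Rightarrow> 'k::field tens \<Rightarrow> 'k tens \<Rightarrow> bool" where
  "PBW_deformation n g f \<longleftrightarrow>
    (let T = tensor_algebra n; If = genideal T {f}; Ig = genideal T {g} in
     \<exists>\<phi>. \<phi> \<in> ring_iso (T Quot If) (assoc_graded n Ig) \<and>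
        (\<forall>c. \<phi> (a_r_coset T If (tens_const c)) = gr_scalar n Ig c) \<and>
        (\<forall>m. \<phi> ` {a_r_coset T If p | p. p \<in> homog n m} = gr_degree n Ig m))"

end

theory Submission
  imports Defs "HOL-Library.Function_Algebras"
begin

text \<open>The associated graded algebra of \<open>U = T(V)/(g)\<close> is the quotient of \<open>T(V)\<close> by the top
  components of the elements of \<open>(g)\<close>; these contain \<open>(f)\<close>, and the point is equality.
  Write an element of \<open>(g)\<close> of degree \<open>e\<close> as \<open>z g + \<Sum>\<^sub>k p\<^sub>k y\<^sub>k\<close> and suppose its top
  component vanishes. As \<open>M\<close> is invertible and \<open>n \<ge> 2\<close>, right multiplication by a nonzero
  vector of \<open>V\<close> is injective modulo \<open>(f)\<close>, which forces \<open>z \<in> (f)\<close>; the overlap identity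
  \<open>u f b g = u g b f + (lower terms)\<close> then rewrites \<open>z g\<close> as a sum of terms ending in letters,
  and induction on the degree puts the element into lower filtration degree. For \<open>n = 1\<close> the
  tensor algebra is commutative and this is immediate. Hence the top components of \<open>(g)\<close> form
  exactly \<open>(f)\<close>, and the symbol map \<open>T(V) \<rightarrow> gr U\<close> induces \<open>A \<cong> gr U\<close>.\<close>

section \<open>Arithmetic of tensors\<close>

lemma sum_fun_apply: "(\<Sum>i\<in>A. (F i :: 'a \<Rightarrow> 'b::comm_monoid_add)) x = (\<Sum>i\<in>A. F i x)"
  by (induction A rule: infinite_finite_induct) auto

lemma sum_eq_single:
  assumes "finite A" "a \<in> A" "\<And>x. x \<in> A \<Longrightarrow> x \<noteq> a \<Longrightarrow> g x = 0"
  shows "sum g A = (g a :: 'b::comm_monoid_add)"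
  using assms by (simp add: sum.remove sum.neutral)

lemma sum_triangle_swap:
  "(\<Sum>i\<le>(L::nat). \<Sum>j\<le>i. (F j i::'a::comm_monoid_add)) = (\<Sum>j\<le>L. \<Sum>i\<in>{j..L}. F j i)"
proof (induction L)
  case (Suc L)
  have "(\<Sum>j\<le>L. \<Sum>i\<in>{j..Suc L}. F j i) = (\<Sum>j\<le>L. (\<Sum>i\<in>{j..L}. F j i) + F j (Suc L))"
    by (intro sum.cong refl) (simp add: atLeastAtMostSuc_conv add.commute)
  then show ?case using Suc by (simp add: sum.distrib add.assoc)
qed simp

lemma drop_eq_singleton_iff:
  "x \<le> length w \<Longrightarrow> drop x w = [k] \<longleftrightarrow> x = length w - 1 \<and> w \<noteq> [] \<and> last w = k"
  by (cases w rule: rev_cases) (auto simp: drop_Cons' drop_append)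

lemma take_eq_singleton_iff: "x \<le> length w \<Longrightarrow> take x w = [k] \<longleftrightarrow> x = 1 \<and> w \<noteq> [] \<and> hd w = k"
  by (cases w) (auto simp: take_Cons')

definition smult :: "'k::field \<Rightarrow> 'k tens \<Rightarrow> 'k tens" where
  "smult c p = (\<lambda>w. c * p w)"

abbreviation tmult (infixl "\<odot>" 70) where "p \<odot> q \<equiv> tens_mult p q"

definition monomial :: "nat list \<Rightarrow> 'k::field tens" where
  "monomial u = (\<lambda>w. if w = u then 1 else 0)"

definition hcomp :: "nat \<Rightarrow> 'k::field tens \<Rightarrow> 'k tens" where
  "hcomp d p = (\<lambda>w. if length w = d then p w else 0)"

definition rquot :: "nat \<Rightarrow> 'k::field tens \<Rightarrow> 'k tens" where
  "rquot k p = (\<lambda>w. p (w @ [k]))"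

definition lquot :: "nat \<Rightarrow> 'k::field tens \<Rightarrow> 'k tens" where
  "lquot k p = (\<lambda>w. p (k # w))"

lemma tens_add_eq: "tens_add p q = p + q"
  by (simp add: tens_add_def fun_eq_iff)

lemma tens_zero_eq: "tens_zero = 0"
  by (simp add: tens_zero_def fun_eq_iff)

lemma tens_const_eq: "tens_const c = smult c (monomial [])"
  by (simp add: tens_const_def smult_def monomial_def fun_eq_iff)

lemma smult_apply [simp]: "smult c p w = c * p w"
  by (simp add: smult_def)

lemma hcomp_apply: "hcomp d p w = (if length w = d then p w else 0)"
  by (simp add: hcomp_def)

lemma rquot_apply [simp]: "rquot k p w = p (w @ [k])"
  by (simp add: rquot_def)

lemma lquot_apply [simp]: "lquot k p w = p (k # w)"
  by (simp add: lquot_def)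

lemma tmult_apply: "(p \<odot> q) w = (\<Sum>i\<le>length w. p (take i w) * q (drop i w))"
  by (simp add: tens_mult_def)

lemma smult_add: "smult c (p + q) = smult c p + smult c q"
  by (simp add: fun_eq_iff algebra_simps)

lemma smult_sum: "smult c (\<Sum>i\<in>A. F i) = (\<Sum>i\<in>A. smult c (F i))"
  by (simp add: fun_eq_iff sum_fun_apply sum_distrib_left)

lemma smult_add_left: "smult (a + b) p = smult a p + smult b p"
  by (simp add: fun_eq_iff algebra_simps)

lemma sum_smult_left: "(\<Sum>i\<in>A. smult (c i) p) = smult (\<Sum>i\<in>A. c i) p"
  by (simp add: fun_eq_iff sum_fun_apply sum_distrib_right)

lemma smult_smult: "smult a (smult b p) = smult (a * b) p"
  by (simp add: fun_eq_iff)

lemma smult_uminus: "smult c (- p) = - smult c p"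
  by (simp add: fun_eq_iff)

lemma smult_one [simp]: "smult 1 p = p"
  by (simp add: fun_eq_iff)

lemma smult_zero [simp]: "smult 0 p = 0" "smult c 0 = 0"
  by (simp_all add: fun_eq_iff)

lemma smult_minus_one: "smult (-1) p = - p"
  by (simp add: fun_eq_iff)

lemma smult_inverse: "c \<noteq> 0 \<Longrightarrow> smult (inverse c) (smult c p) = p"
  by (simp add: fun_eq_iff)

lemma smult_monomial_apply: "smult c (monomial u) w = (if w = u then c else 0)"
  by (simp add: monomial_def)

lemma tmult_add_left: "(p + q) \<odot> r = p \<odot> r + q \<odot> r"
  by (simp add: tens_mult_def fun_eq_iff distrib_right sum.distrib)

lemma tmult_add_right: "r \<odot> (p + q) = r \<odot> p + r \<odot> q"
  by (simp add: tens_mult_def fun_eq_iff distrib_left sum.distrib)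

lemma tmult_diff_left: "(p - q) \<odot> r = p \<odot> r - q \<odot> r"
  by (simp add: tens_mult_def fun_eq_iff left_diff_distrib sum_subtractf)

lemma tmult_diff_right: "r \<odot> (p - q) = r \<odot> p - r \<odot> q"
  by (simp add: tens_mult_def fun_eq_iff right_diff_distrib sum_subtractf)

lemma tmult_minus_left: "(- p) \<odot> r = - (p \<odot> r)"
  by (simp add: tens_mult_def fun_eq_iff sum_negf)

lemma tmult_zero_left [simp]: "0 \<odot> r = 0"
  by (simp add: tens_mult_def fun_eq_iff)

lemma tmult_zero_right [simp]: "r \<odot> 0 = 0"
  by (simp add: tens_mult_def fun_eq_iff)

lemma tmult_smult_left: "smult c p \<odot> r = smult c (p \<odot> r)"
  by (simp add: tens_mult_def fun_eq_iff sum_distrib_left mult.assoc)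

lemma tmult_smult_right: "r \<odot> smult c p = smult c (r \<odot> p)"
  by (simp add: tens_mult_def fun_eq_iff sum_distrib_left algebra_simps)

lemma tmult_sum_left: "(\<Sum>i\<in>A. F i) \<odot> r = (\<Sum>i\<in>A. F i \<odot> r)"
  by (simp add: fun_eq_iff tmult_apply sum_fun_apply sum_distrib_right sum.swap[where A=A])

lemma tmult_sum_right: "r \<odot> (\<Sum>i\<in>A. F i) = (\<Sum>i\<in>A. r \<odot> F i)"
  by (simp add: fun_eq_iff tmult_apply sum_fun_apply sum_distrib_left sum.swap[where A=A])

lemma tmult_assoc: "(p \<odot> q) \<odot> r = p \<odot> (q \<odot> r)"
proof (rule ext)
  fix w :: "nat list"
  define L where "L = length w"
  define F where "F = (\<lambda>j i. p (take j w) * q (drop j (take i w)) * r (drop i w))"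
  have inner: "(\<Sum>i\<in>{j..L}. F j i) = p (take j w) * (q \<odot> r) (drop j w)" if "j \<le> L" for j
  proof -
    have "(\<Sum>i\<in>{j..L}. F j i) = (\<Sum>i\<le>L - j. F j (i + j))"
      using that by (intro sum.reindex_bij_witness[where i="\<lambda>i. i + j" and j="\<lambda>i. i - j"]) auto
    also have "\<dots> = p (take j w) * (q \<odot> r) (drop j w)"
      by (auto simp: F_def L_def tmult_apply sum_distrib_left mult.assoc take_drop add.commute
          intro!: sum.cong)
    finally show ?thesis .
  qed
  have "((p \<odot> q) \<odot> r) w = (\<Sum>i\<le>L. \<Sum>j\<le>i. F j i)"
    unfolding tmult_apply L_def F_def by (auto intro!: sum.cong simp: sum_distrib_right min_def)
  also have "\<dots> = (\<Sum>j\<le>L. \<Sum>i\<in>{j..L}. F j i)"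
    by (rule sum_triangle_swap)
  also have "\<dots> = (\<Sum>j\<le>L. p (take j w) * (q \<odot> r) (drop j w))"
    by (intro sum.cong refl) (simp add: inner)
  also have "\<dots> = (p \<odot> (q \<odot> r)) w"
    by (simp add: tmult_apply[of p "q \<odot> r"] L_def)
  finally show "((p \<odot> q) \<odot> r) w = (p \<odot> (q \<odot> r)) w" .
qed

lemma tmult_nonzeroE:
  assumes "(p \<odot> q) w \<noteq> 0"
  obtains i where "i \<le> length w" "p (take i w) \<noteq> 0" "q (drop i w) \<noteq> 0"
proof -
  from assms obtain i where "i \<le> length w" "p (take i w) * q (drop i w) \<noteq> 0"
    unfolding tmult_apply by (metis (no_types, lifting) atMost_iff sum.neutral)
  then show ?thesis using that by auto
qed

lemma monomial_tmult_monomial: "monomial u \<odot> monomial v = monomial (u @ v)"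
proof (rule ext)
  fix w
  show "(monomial u \<odot> monomial v) w = monomial (u @ v) w"
  proof (cases "w = u @ v")
    case True
    have "(monomial u \<odot> monomial v) w = monomial u (take (length u) w) * monomial v (drop (length u) w)"
      unfolding tmult_apply
    proof (rule sum_eq_single)
      fix x assume "x \<in> {..length w}" "x \<noteq> length u"
      then have "take x w \<noteq> u" by auto
      then show "monomial u (take x w) * monomial v (drop x w) = 0" by (simp add: monomial_def)
    qed (use True in auto)
    then show ?thesis using True by (simp add: monomial_def)
  next
    case False
    then have "(monomial u \<odot> monomial v) w = 0"
      unfolding tmult_apply by (intro sum.neutral) (auto simp: monomial_def)
    then show ?thesis using False by (simp add: monomial_def)
  qed
qed

lemma monomial_Nil_tmult [simp]: "monomial [] \<odot> p = p"
proof (rule ext)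
  fix w
  show "(monomial [] \<odot> p) w = p w"
    unfolding tmult_apply by (subst sum_eq_single[where a=0]) (auto simp: monomial_def)
qed

lemma tmult_monomial_Nil [simp]: "p \<odot> monomial [] = p"
proof (rule ext)
  fix w
  show "(p \<odot> monomial []) w = p w"
    unfolding tmult_apply by (subst sum_eq_single[where a="length w"]) (auto simp: monomial_def)
qed

lemma tmult_letter_apply:
  "(p \<odot> monomial [k]) w = (if w \<noteq> [] \<and> last w = k then p (butlast w) else 0)"
proof (cases "w \<noteq> [] \<and> last w = k")
  case True
  have "(p \<odot> monomial [k]) w = p (take (length w - 1) w) * monomial [k] (drop (length w - 1) w)"
    unfolding tmult_apply by (intro sum_eq_single) (auto simp: monomial_def drop_eq_singleton_iff)
  then show ?thesis using True by (simp add: monomial_def drop_eq_singleton_iff butlast_conv_take)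
next
  case False
  then show ?thesis
    unfolding tmult_apply by (auto intro!: sum.neutral simp: monomial_def drop_eq_singleton_iff)
qed

lemma letter_tmult_apply:
  "(monomial [k] \<odot> p) w = (if w \<noteq> [] \<and> hd w = k then p (tl w) else 0)"
proof (cases "w \<noteq> [] \<and> hd w = k")
  case True
  have "(monomial [k] \<odot> p) w = monomial [k] (take 1 w) * p (drop 1 w)"
    unfolding tmult_apply using True
    by (intro sum_eq_single) (auto simp: monomial_def take_eq_singleton_iff Suc_le_eq)
  moreover have "take 1 w = [k]" using True by (cases w) auto
  ultimately show ?thesis using True by (simp add: monomial_def drop_Suc)
next
  case False
  then show ?thesis
    unfolding tmult_apply by (auto intro!: sum.neutral simp: monomial_def take_eq_singleton_iff)
qed

lemma rquot_add: "rquot k (p + q) = rquot k p + rquot k q"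
  by (simp add: fun_eq_iff)

lemma rquot_zero [simp]: "rquot k 0 = 0"
  by (simp add: fun_eq_iff)

lemma rquot_smult: "rquot k (smult c p) = smult c (rquot k p)"
  by (simp add: fun_eq_iff)

lemma rquot_sum: "rquot k (\<Sum>i\<in>A. F i) = (\<Sum>i\<in>A. rquot k (F i))"
  by (simp add: fun_eq_iff sum_fun_apply)

lemma rquot_tmult_letter: "rquot k (p \<odot> monomial [l]) = (if k = l then p else 0)"
  by (simp add: fun_eq_iff tmult_letter_apply)

lemma rquot_sum_letters: "k < n \<Longrightarrow> rquot k (\<Sum>l<n. ps l \<odot> monomial [l]) = ps k"
  by (simp add: rquot_sum rquot_tmult_letter sum_eq_single[where a=k])


section \<open>Finite support and degree\<close>

definition deg_le :: "nat \<Rightarrow> 'k::field tens \<Rightarrow> bool" where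
  "deg_le a p \<longleftrightarrow> (\<forall>w. p w \<noteq> 0 \<longrightarrow> length w \<le> a)"

definition homogeneous :: "nat \<Rightarrow> 'k::field tens \<Rightarrow> bool" where
  "homogeneous d p \<longleftrightarrow> (\<forall>w. p w \<noteq> 0 \<longrightarrow> length w = d)"

lemma filt_eq: "filt n m = {p \<in> tens_carrier n. deg_le m p}"
  by (simp add: filt_def deg_le_def)

lemma homog_eq: "homog n m = {p \<in> tens_carrier n. homogeneous m p}"
  by (simp add: homog_def homogeneous_def)

lemma tens_carrierD: "p \<in> tens_carrier n \<Longrightarrow> p w \<noteq> 0 \<Longrightarrow> set w \<subseteq> {..<n}"
  by (simp add: tens_carrier_def)

lemma tens_carrier_finite: "p \<in> tens_carrier n \<Longrightarrow> finite {w. p w \<noteq> 0}"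
  by (simp add: tens_carrier_def)

lemma tens_carrier_support_subset:
  assumes "p \<in> tens_carrier n" "\<And>w. q w \<noteq> 0 \<Longrightarrow> p w \<noteq> 0"
  shows "q \<in> tens_carrier n"
  using assms finite_subset[of "{w. q w \<noteq> 0}" "{w. p w \<noteq> 0}"] unfolding tens_carrier_def by blast

lemma tens_carrier_zero [simp]: "0 \<in> tens_carrier n"
  by (simp add: tens_carrier_def)

lemma tens_carrier_add [intro]:
  assumes p: "p \<in> tens_carrier n" and q: "q \<in> tens_carrier n"
  shows "p + q \<in> tens_carrier n"
proof -
  have "{w. (p + q) w \<noteq> 0} \<subseteq> {w. p w \<noteq> 0} \<union> {w. q w \<noteq> 0}" by auto
  then have "finite {w. (p + q) w \<noteq> 0}"
    using tens_carrier_finite[OF p] tens_carrier_finite[OF q] by (meson finite_UnI finite_subset)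
  moreover have "set w \<subseteq> {..<n}" if "(p + q) w \<noteq> 0" for w
    using that tens_carrierD[OF p, of w] tens_carrierD[OF q, of w] by (cases "p w = 0") auto
  ultimately show ?thesis unfolding tens_carrier_def by blast
qed

lemma tens_carrier_smult [intro]: "p \<in> tens_carrier n \<Longrightarrow> smult c p \<in> tens_carrier n"
  by (erule tens_carrier_support_subset) simp

lemma tens_carrier_uminus [intro]: "p \<in> tens_carrier n \<Longrightarrow> - p \<in> tens_carrier n"
  by (erule tens_carrier_support_subset) simp

lemma tens_carrier_diff [intro]:
  "p \<in> tens_carrier n \<Longrightarrow> q \<in> tens_carrier n \<Longrightarrow> p - q \<in> tens_carrier n"
  using tens_carrier_add[of p n "-q"] by auto

lemma tens_carrier_sum [intro]:
  "(\<And>i. i \<in> A \<Longrightarrow> F i \<in> tens_carrier n) \<Longrightarrow> (\<Sum>i\<in>A. F i) \<in> tens_carrier n"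
  by (induction A rule: infinite_finite_induct) auto

lemma tens_carrier_hcomp [intro]: "p \<in> tens_carrier n \<Longrightarrow> hcomp d p \<in> tens_carrier n"
  by (erule tens_carrier_support_subset) (simp add: hcomp_apply split: if_splits)

lemma tens_carrier_monomial [intro]: "set u \<subseteq> {..<n} \<Longrightarrow> monomial u \<in> tens_carrier n"
  unfolding tens_carrier_def monomial_def by auto

lemma tens_carrier_const [intro]: "tens_const c \<in> tens_carrier n"
  unfolding tens_carrier_def tens_const_def by auto

lemma tens_carrier_quot:
  assumes p: "p \<in> tens_carrier n" and k: "k < n" and f: "inj f"
    and q: "\<And>w. q w = p (f w)" and letters: "\<And>w. set (f w) = insert k (set w)"
  shows "q \<in> tens_carrier n"
proof -
  have "{w. q w \<noteq> 0} = f -` {w. p w \<noteq> 0}"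
    by (auto simp: q)
  then have "finite {w. q w \<noteq> 0}"
    using finite_vimageI[OF tens_carrier_finite[OF p] f] by simp
  moreover have "set w \<subseteq> {..<n}" if "q w \<noteq> 0" for w
    using tens_carrierD[OF p, of "f w"] that by (simp add: q letters)
  ultimately show ?thesis unfolding tens_carrier_def by blast
qed

lemma tens_carrier_rquot [intro]: "p \<in> tens_carrier n \<Longrightarrow> k < n \<Longrightarrow> rquot k p \<in> tens_carrier n"
  by (erule tens_carrier_quot[where f="\<lambda>w. w @ [k]"]) (auto simp: inj_def)

lemma tens_carrier_lquot [intro]: "p \<in> tens_carrier n \<Longrightarrow> k < n \<Longrightarrow> lquot k p \<in> tens_carrier n"
  by (erule tens_carrier_quot[where f="\<lambda>w. k # w"]) (auto simp: inj_def)

lemma tens_carrier_tmult [intro]: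
  assumes p: "p \<in> tens_carrier n" and q: "q \<in> tens_carrier n"
  shows "p \<odot> q \<in> tens_carrier n"
proof -
  have "{w. (p \<odot> q) w \<noteq> 0} \<subseteq> (\<lambda>(u, v). u @ v) ` ({w. p w \<noteq> 0} \<times> {w. q w \<noteq> 0})"
  proof
    fix w assume "w \<in> {w. (p \<odot> q) w \<noteq> 0}"
    then have "(p \<odot> q) w \<noteq> 0" by simp
    then obtain i where "i \<le> length w" "p (take i w) \<noteq> 0" "q (drop i w) \<noteq> 0"
      by (rule tmult_nonzeroE)
    then show "w \<in> (\<lambda>(u, v). u @ v) ` ({w. p w \<noteq> 0} \<times> {w. q w \<noteq> 0})"
      by (intro rev_image_eqI[of "(take i w, drop i w)"]) auto
  qed
  then have "finite {w. (p \<odot> q) w \<noteq> 0}"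
    by (rule finite_subset[OF _ finite_imageI[OF finite_cartesian_product
          [OF tens_carrier_finite[OF p] tens_carrier_finite[OF q]]]])
  moreover have "set w \<subseteq> {..<n}" if nz: "(p \<odot> q) w \<noteq> 0" for w
  proof -
    obtain i where "i \<le> length w" "p (take i w) \<noteq> 0" "q (drop i w) \<noteq> 0"
      using nz by (rule tmult_nonzeroE)
    then have "set (take i w) \<subseteq> {..<n}" "set (drop i w) \<subseteq> {..<n}"
      using tens_carrierD[OF p] tens_carrierD[OF q] by auto
    then show ?thesis by (metis append_take_drop_id le_sup_iff set_append)
  qed
  ultimately show ?thesis unfolding tens_carrier_def by blast
qed

lemma tens_carrier_deg_le: "p \<in> tens_carrier n \<Longrightarrow> \<exists>B. deg_le B p"
  unfolding deg_le_def
  by (metis (mono_tags, lifting) finite_imageI finite_nat_set_iff_bounded_le image_eqI mem_Collect_eq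
      tens_carrier_finite)

lemma deg_le_tmult: "deg_le a p \<Longrightarrow> deg_le b q \<Longrightarrow> deg_le (a + b) (p \<odot> q)"
  unfolding deg_le_def by (metis add_le_mono append_take_drop_id length_append tmult_nonzeroE)

lemma homogeneous_tmult: "homogeneous a p \<Longrightarrow> homogeneous b q \<Longrightarrow> homogeneous (a + b) (p \<odot> q)"
  unfolding homogeneous_def by (metis append_take_drop_id length_append tmult_nonzeroE)

lemma deg_le_zero [simp]: "deg_le a 0"
  by (simp add: deg_le_def)

lemma homogeneous_zero [simp]: "homogeneous a 0"
  by (simp add: homogeneous_def)

lemma homogeneous_imp_deg_le: "homogeneous a p \<Longrightarrow> deg_le a p"
  by (simp add: homogeneous_def deg_le_def)

lemma deg_le_mono: "deg_le a p \<Longrightarrow> a \<le> b \<Longrightarrow> deg_le b p"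
  by (auto simp: deg_le_def)

lemma deg_le_add: "deg_le a p \<Longrightarrow> deg_le a q \<Longrightarrow> deg_le a (p + q)"
  unfolding deg_le_def plus_fun_apply by (metis add.left_neutral)

lemma deg_le_uminus: "deg_le a p \<Longrightarrow> deg_le a (- p)"
  by (simp add: deg_le_def)

lemma deg_le_diff: "deg_le a p \<Longrightarrow> deg_le a q \<Longrightarrow> deg_le a (p - q)"
  unfolding deg_le_def minus_apply by (metis diff_zero eq_iff_diff_eq_0)

lemma homogeneous_add: "homogeneous a p \<Longrightarrow> homogeneous a q \<Longrightarrow> homogeneous a (p + q)"
  unfolding homogeneous_def plus_fun_apply by (metis add.left_neutral)

lemma homogeneous_smult: "homogeneous a p \<Longrightarrow> homogeneous a (smult c p)"
  by (simp add: homogeneous_def)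

lemma homogeneous_sum:
  "(\<And>i. i \<in> A \<Longrightarrow> homogeneous a (F i)) \<Longrightarrow> homogeneous a (\<Sum>i\<in>A. F i)"
  by (induction A rule: infinite_finite_induct) (auto intro: homogeneous_add)

lemma homogeneous_monomial: "homogeneous (length u) (monomial u)"
  by (simp add: homogeneous_def monomial_def)

lemma homogeneous_hcomp: "homogeneous d (hcomp d p)"
  by (simp add: homogeneous_def hcomp_def)

lemma deg_le_hcomp: "deg_le d (hcomp d p)"
  by (simp add: deg_le_def hcomp_def)

lemma hcomp_add: "hcomp d (p + q) = hcomp d p + hcomp d q"
  by (simp add: hcomp_def fun_eq_iff)

lemma hcomp_diff: "hcomp d (p - q) = hcomp d p - hcomp d q"
  by (simp add: hcomp_def fun_eq_iff)

lemma hcomp_zero [simp]: "hcomp d 0 = 0"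
  by (simp add: hcomp_def fun_eq_iff)

lemma hcomp_smult: "hcomp d (smult c p) = smult c (hcomp d p)"
  by (simp add: hcomp_def fun_eq_iff)

lemma hcomp_sum: "hcomp d (\<Sum>i\<in>A. F i) = (\<Sum>i\<in>A. hcomp d (F i))"
  by (simp add: hcomp_def fun_eq_iff sum_fun_apply)

lemma hcomp_homogeneous: "homogeneous d p \<Longrightarrow> hcomp d p = p"
  by (auto simp: hcomp_def fun_eq_iff homogeneous_def)

lemma hcomp_homogeneous_other: "homogeneous e p \<Longrightarrow> e \<noteq> d \<Longrightarrow> hcomp d p = 0"
  by (auto simp: hcomp_def fun_eq_iff homogeneous_def)

lemma hcomp_deg_gt: "deg_le a p \<Longrightarrow> a < d \<Longrightarrow> hcomp d p = 0"
  by (auto simp: hcomp_def fun_eq_iff deg_le_def)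

lemma hcomp_hcomp: "hcomp d (hcomp e p) = (if d = e then hcomp d p else 0)"
  by (simp add: hcomp_def fun_eq_iff)

lemma hcomp_monomial_Nil: "hcomp m (monomial []) = (if m = 0 then monomial [] else 0)"
  by (auto simp: fun_eq_iff hcomp_apply monomial_def)

lemma hcomp_tmult_letter: "hcomp (Suc e) (p \<odot> monomial [k]) = hcomp e p \<odot> monomial [k]"
  by (auto simp: fun_eq_iff hcomp_apply tmult_letter_apply)

lemma deg_le_diff_hcomp: "deg_le (Suc m) p \<Longrightarrow> deg_le m (p - hcomp (Suc m) p)"
  by (auto simp: deg_le_def hcomp_apply split: if_splits)

lemma sum_hcomp: "deg_le B p \<Longrightarrow> (\<Sum>d\<le>B. hcomp d p) = p"
proof (rule ext)
  fix w assume B: "deg_le B p"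
  show "(\<Sum>d\<le>B. hcomp d p) w = p w"
  proof (cases "length w \<le> B")
    case True
    then show ?thesis by (simp add: sum_fun_apply hcomp_apply sum_eq_single[where a="length w"])
  next
    case False
    then show ?thesis using B by (auto simp: sum_fun_apply hcomp_def deg_le_def)
  qed
qed

lemma hcomp_tmult: "hcomp d (p \<odot> q) = (\<Sum>i\<le>d. hcomp i p \<odot> hcomp (d - i) q)"
proof (rule ext)
  fix w
  show "hcomp d (p \<odot> q) w = (\<Sum>i\<le>d. hcomp i p \<odot> hcomp (d - i) q) w"
  proof (cases "length w = d")
    case True
    have "(hcomp i p \<odot> hcomp (d - i) q) w = p (take i w) * q (drop i w)" if "i \<le> d" for i
      unfolding tmult_apply using that True
      by (subst sum_eq_single[where a=i]) (auto simp: hcomp_apply min_def)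
    then show ?thesis using True by (simp add: sum_fun_apply hcomp_apply tmult_apply)
  next
    case False
    have "(hcomp i p \<odot> hcomp (d - i) q) w = 0" if "i \<le> d" for i
      using homogeneous_tmult[OF homogeneous_hcomp[of i p] homogeneous_hcomp[of "d - i" q]] that False
      by (auto simp: homogeneous_def)
    then show ?thesis using False by (simp add: sum_fun_apply hcomp_apply)
  qed
qed

lemma homog_carrier: "q \<in> homog n t \<Longrightarrow> q \<in> tens_carrier n"
  by (simp add: homog_eq)

lemma homog_homogeneous: "q \<in> homog n t \<Longrightarrow> homogeneous t q"
  by (simp add: homog_eq)

lemma homog_add: "p \<in> homog n t \<Longrightarrow> q \<in> homog n t \<Longrightarrow> p + q \<in> homog n t"
  by (auto simp: homog_eq intro: homogeneous_add)

lemma homog_smult: "p \<in> homog n t \<Longrightarrow> smult c p \<in> homog n t"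
  by (auto simp: homog_eq intro: homogeneous_smult)

lemma homog_uminus: "p \<in> homog n t \<Longrightarrow> - p \<in> homog n t"
  using homog_smult[where c="-1"] by (simp add: smult_minus_one)

lemma homog_sum: "(\<And>i. i \<in> A \<Longrightarrow> F i \<in> homog n t) \<Longrightarrow> (\<Sum>i\<in>A. F i) \<in> homog n t"
  by (auto simp: homog_eq intro!: tens_carrier_sum homogeneous_sum)

lemma homog_tmult: "p \<in> homog n a \<Longrightarrow> q \<in> homog n b \<Longrightarrow> p \<odot> q \<in> homog n (a + b)"
  by (auto simp: homog_eq intro: homogeneous_tmult)

lemma homog_monomial: "set u \<subseteq> {..<n} \<Longrightarrow> monomial u \<in> homog n (length u)"
  by (auto simp: homog_eq intro: homogeneous_monomial)

lemma homog_monomial_Nil: "monomial [] \<in> homog n 0"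
  using homog_monomial[of "[]" n] by simp

lemma homog_letter: "k < n \<Longrightarrow> monomial [k] \<in> homog n 1"
  using homog_monomial[of "[k]" n] by simp

lemma homog_hcomp: "p \<in> tens_carrier n \<Longrightarrow> hcomp d p \<in> homog n d"
  by (auto simp: homog_eq intro: homogeneous_hcomp)

lemma homog_0_eq: "q \<in> homog n 0 \<Longrightarrow> q = smult (q []) (monomial [])"
  by (auto simp: homog_eq homogeneous_def monomial_def fun_eq_iff)

lemma homog_rquot: "q \<in> homog n (Suc t) \<Longrightarrow> k < n \<Longrightarrow> rquot k q \<in> homog n t"
  by (auto simp: homog_eq homogeneous_def)

lemma homog_lquot: "q \<in> homog n (Suc t) \<Longrightarrow> k < n \<Longrightarrow> lquot k q \<in> homog n t"
  by (auto simp: homog_eq homogeneous_def)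

lemma homog_1_nonzero_coeff:
  assumes "v \<in> homog n 1" "v \<noteq> 0"
  obtains l where "l < n" "v [l] \<noteq> 0"
proof -
  obtain w where w: "v w \<noteq> 0" using assms(2) by (auto simp: fun_eq_iff)
  then obtain l where "w = [l]"
    using assms(1) by (auto simp: homog_eq homogeneous_def length_Suc_conv)
  then show ?thesis using that w tens_carrierD[OF homog_carrier[OF assms(1)] w] by auto
qed

lemma rquot_tmult_homog_1: "v \<in> homog n 1 \<Longrightarrow> rquot l (x \<odot> v) = smult (v [l]) x"
proof (rule ext)
  fix w assume v: "v \<in> homog n 1"
  have "(x \<odot> v) (w @ [l]) = x w * v [l]"
    unfolding tmult_apply using homog_homogeneous[OF v]
    by (subst sum_eq_single[where a="length w"]) (auto simp: homogeneous_def)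
  then show "rquot l (x \<odot> v) w = smult (v [l]) x w" by simp
qed

lemma rquot_decomp:
  assumes q: "q \<in> tens_carrier n" and no_const: "q [] = 0"
  shows "(\<Sum>k<n. rquot k q \<odot> monomial [k]) = q"
proof (rule ext)
  fix w
  show "(\<Sum>k<n. rquot k q \<odot> monomial [k]) w = q w"
  proof (cases "q w = 0")
    case False
    then have "w \<noteq> []" using no_const by auto
    moreover have "set w \<subseteq> {..<n}" using tens_carrierD[OF q False] .
    ultimately have w: "w \<noteq> []" "last w < n" by (auto dest: last_in_set)
    then show ?thesis by (simp add: sum_fun_apply tmult_letter_apply sum_eq_single[where a="last w"])
  qed (auto simp: sum_fun_apply tmult_letter_apply append_butlast_last_id intro!: sum.neutral)
qed

lemma lquot_decomp:
  assumes q: "q \<in> tens_carrier n" and no_const: "q [] = 0"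
  shows "(\<Sum>k<n. monomial [k] \<odot> lquot k q) = q"
proof (rule ext)
  fix w
  show "(\<Sum>k<n. monomial [k] \<odot> lquot k q) w = q w"
  proof (cases "q w = 0")
    case False
    then have "w \<noteq> []" using no_const by auto
    moreover have "set w \<subseteq> {..<n}" using tens_carrierD[OF q False] .
    ultimately have w: "w \<noteq> []" "hd w < n" by (auto dest: hd_in_set)
    then show ?thesis by (simp add: sum_fun_apply letter_tmult_apply sum_eq_single[where a="hd w"])
  qed (auto simp: sum_fun_apply letter_tmult_apply intro!: sum.neutral)
qed

lemma butlast_replicate: "butlast (replicate m x) = replicate (m - 1) x"
proof (cases m)
  case (Suc k)
  then show ?thesis using butlast_snoc[of "replicate k x" x] by (simp add: replicate_append_same)
qed simp

lemma tmult_letter_commute_single: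
  assumes p: "p \<in> tens_carrier (Suc 0)"
  shows "p \<odot> monomial [0] = monomial [0] \<odot> p"
proof (rule ext)
  fix w
  have zeros: "set u \<subseteq> {0}" if "p u \<noteq> 0" for u
    using tens_carrierD[OF p that] by auto
  show "(p \<odot> monomial [0]) w = (monomial [0] \<odot> p) w"
  proof (cases "set w \<subseteq> {0}")
    case True
    then have "w = replicate (length w) 0" by (intro replicate_eqI) auto
    then have "butlast w = tl w" by (metis butlast_replicate tl_replicate)
    moreover have "w \<noteq> [] \<Longrightarrow> last w = 0 \<and> hd w = 0"
      using True by (metis hd_in_set last_in_set singletonD subsetD)
    ultimately show ?thesis by (auto simp: tmult_letter_apply letter_tmult_apply)
  next
    case False
    have "p (butlast w) = 0" if "last w = 0"
      using zeros[of "butlast w"] False that by (cases w rule: rev_cases) auto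
    moreover have "p (tl w) = 0" if "hd w = 0"
      using zeros[of "tl w"] False that by (cases w) auto
    ultimately show ?thesis by (simp add: tmult_letter_apply letter_tmult_apply)
  qed
qed

section \<open>The tensor algebra as a ring\<close>

lemma tensor_algebra_simps [simp]:
  "carrier (tensor_algebra n) = tens_carrier n"
  "mult (tensor_algebra n) = tens_mult"
  "add (tensor_algebra n) = (+)"
  "zero (tensor_algebra n) = 0"
  "one (tensor_algebra n) = monomial []"
  by (auto simp: tensor_algebra_def fun_eq_iff tens_add_def tens_zero_def tens_const_def monomial_def)

lemma ring_tensor_algebra: "ring (tensor_algebra n)"
proof (rule ringI)
  show "abelian_group (tensor_algebra n)"
  proof (rule abelian_groupI, goal_cases)
    case (6 x)
    then show ?case by (intro bexI[of _ "-x"]) auto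
  qed (auto simp: add.assoc add.commute)
  show "monoid (tensor_algebra n)"
    by (rule monoidI) (auto simp: tmult_assoc)
qed (auto simp: tmult_add_left tmult_add_right)

lemma tensor_algebra_a_inv: assumes "x \<in> tens_carrier n" shows "a_inv (tensor_algebra n) x = - x"
proof -
  interpret ring "tensor_algebra n" by (rule ring_tensor_algebra)
  show ?thesis using assms by (intro minus_equality) auto
qed

lemma tensor_algebra_a_minus:
  "x \<in> tens_carrier n \<Longrightarrow> y \<in> tens_carrier n \<Longrightarrow> a_minus (tensor_algebra n) x y = x - y"
  by (simp add: a_minus_def tensor_algebra_a_inv)

section \<open>The graded pieces of a two-sided ideal with a quadratic generator\<close>

text \<open>From here on tensors are treated as vectors: with the pointwise rules the simplifier would
  turn every identity between tensors into one between coefficient functions.\<close>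

declare plus_fun_apply [simp del] zero_fun_apply [simp del] minus_apply [simp del]
  uminus_apply [simp del] smult_apply [simp del] rquot_apply [simp del] lquot_apply [simp del]

text \<open>For a generator \<open>r\<close> of degree at most 2, \<open>ideal_level n r e\<close> is the span of the
  products \<open>z r w\<close> with \<open>z\<close> homogeneous and \<open>w\<close> a word, \<open>deg z + 2 + |w| = e\<close>;
  for homogeneous \<open>r\<close> it is the degree \<open>e\<close> part of the ideal \<open>(r)\<close>.
  \<open>ideal_upto n r e\<close> collects the levels \<open>\<le> e\<close>.\<close>

inductive ideal_level :: "nat \<Rightarrow> 'k::field tens \<Rightarrow> nat \<Rightarrow> 'k tens \<Rightarrow> bool" for n r where
  level_gen: "z \<in> homog n d \<Longrightarrow> ideal_level n r (Suc (Suc d)) (z \<odot> r)"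
| level_right: "ideal_level n r e p \<Longrightarrow> k < n \<Longrightarrow> ideal_level n r (Suc e) (p \<odot> monomial [k])"
| level_add: "ideal_level n r e p \<Longrightarrow> ideal_level n r e q \<Longrightarrow> ideal_level n r e (p + q)"
| level_zero: "ideal_level n r e 0"

inductive ideal_upto :: "nat \<Rightarrow> 'k::field tens \<Rightarrow> nat \<Rightarrow> 'k tens \<Rightarrow> bool" for n r where
  upto_level: "ideal_level n r d p \<Longrightarrow> d \<le> e \<Longrightarrow> ideal_upto n r e p"
| upto_add: "ideal_upto n r e p \<Longrightarrow> ideal_upto n r e q \<Longrightarrow> ideal_upto n r e (p + q)"

lemma ideal_level_carrier: "ideal_level n r e p \<Longrightarrow> r \<in> tens_carrier n \<Longrightarrow> p \<in> tens_carrier n"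
  by (induction rule: ideal_level.induct) (auto dest: homog_carrier intro: homog_carrier[OF homog_letter])

lemma ideal_level_smult: "ideal_level n r e p \<Longrightarrow> ideal_level n r e (smult c p)"
proof (induction rule: ideal_level.induct)
  case (level_gen z d)
  then show ?case using ideal_level.level_gen[OF homog_smult[OF level_gen]] by (simp add: tmult_smult_left)
next
  case (level_right e p k)
  then show ?case using ideal_level.level_right by (fastforce simp: tmult_smult_left)
qed (auto simp: smult_add intro: ideal_level.intros)

lemma ideal_level_uminus: "ideal_level n r e p \<Longrightarrow> ideal_level n r e (- p)"
  using ideal_level_smult[where c="-1"] by (simp add: smult_minus_one)

lemma ideal_level_diff: "ideal_level n r e p \<Longrightarrow> ideal_level n r e q \<Longrightarrow> ideal_level n r e (p - q)"
  using level_add[OF _ ideal_level_uminus] by (metis diff_conv_add_uminus)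

lemma ideal_level_sum:
  "(\<And>i. i \<in> A \<Longrightarrow> ideal_level n r e (F i)) \<Longrightarrow> ideal_level n r e (\<Sum>i\<in>A. F i)"
  by (induction A rule: infinite_finite_induct) (auto intro: level_add level_zero)

lemma ideal_level_letter_left:
  "ideal_level n r e p \<Longrightarrow> k < n \<Longrightarrow> ideal_level n r (Suc e) (monomial [k] \<odot> p)"
proof (induction rule: ideal_level.induct)
  case (level_gen z d)
  have "monomial [k] \<odot> z \<in> homog n (Suc d)"
    using homog_tmult[OF homog_letter level_gen(1)] level_gen(2) by simp
  then show ?case using ideal_level.level_gen by (fastforce simp: tmult_assoc)
next
  case (level_right e p l)
  then show ?case using ideal_level.level_right by (fastforce simp: tmult_assoc)
qed (auto simp: tmult_add_right intro: ideal_level.intros)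

lemma ideal_level_homog_right:
  "q \<in> homog n t \<Longrightarrow> ideal_level n r e p \<Longrightarrow> ideal_level n r (e + t) (p \<odot> q)"
proof (induction t arbitrary: q)
  case 0
  have "p \<odot> q = smult (q []) p"
    by (subst homog_0_eq[OF 0(1)]) (simp add: tmult_smult_right)
  then show ?case using ideal_level_smult[OF 0(2)] by simp
next
  case (Suc t)
  have "q [] = 0" using Suc(2) by (auto simp: homog_eq homogeneous_def)
  then have "p \<odot> q = p \<odot> (\<Sum>k<n. rquot k q \<odot> monomial [k])"
    using rquot_decomp[OF homog_carrier[OF Suc(2)]] by simp
  also have "\<dots> = (\<Sum>k<n. (p \<odot> rquot k q) \<odot> monomial [k])"
    by (simp add: tmult_sum_right tmult_assoc)
  finally have eq: "p \<odot> q = (\<Sum>k<n. (p \<odot> rquot k q) \<odot> monomial [k])" .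
  have "ideal_level n r (e + Suc t) (\<Sum>k<n. (p \<odot> rquot k q) \<odot> monomial [k])"
    using Suc by (auto intro!: ideal_level_sum level_right[where e="e + t", simplified] homog_rquot)
  then show ?case using eq by simp
qed

lemma ideal_level_homog_left:
  "q \<in> homog n t \<Longrightarrow> ideal_level n r e p \<Longrightarrow> ideal_level n r (t + e) (q \<odot> p)"
proof (induction t arbitrary: q)
  case 0
  have "q \<odot> p = smult (q []) p"
    by (subst homog_0_eq[OF 0(1)]) (simp add: tmult_smult_left)
  then show ?case using ideal_level_smult[OF 0(2)] by simp
next
  case (Suc t)
  have "q [] = 0" using Suc(2) by (auto simp: homog_eq homogeneous_def)
  then have "q \<odot> p = (\<Sum>k<n. monomial [k] \<odot> lquot k q) \<odot> p"
    using lquot_decomp[OF homog_carrier[OF Suc(2)]] by simp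
  also have "\<dots> = (\<Sum>k<n. monomial [k] \<odot> (lquot k q \<odot> p))"
    by (simp add: tmult_sum_left tmult_assoc)
  finally have eq: "q \<odot> p = (\<Sum>k<n. monomial [k] \<odot> (lquot k q \<odot> p))" .
  have "ideal_level n r (Suc t + e) (\<Sum>k<n. monomial [k] \<odot> (lquot k q \<odot> p))"
    using Suc by (auto intro!: ideal_level_sum ideal_level_letter_left[where e="t + e", simplified] homog_lquot)
  then show ?case using eq by simp
qed

lemma ideal_level_below_2: "ideal_level n r e p \<Longrightarrow> e < 2 \<Longrightarrow> p = 0"
  by (induction rule: ideal_level.induct) auto

lemma ideal_level_decomp:
  "ideal_level n r e p \<Longrightarrow> \<exists>z ps. z \<in> homog n (e - 2) \<and> (e < 2 \<longrightarrow> z = 0) \<and>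
      (\<forall>k<n. ideal_level n r (e - 1) (ps k)) \<and> p = z \<odot> r + (\<Sum>k<n. ps k \<odot> monomial [k])"
proof (induction rule: ideal_level.induct)
  case (level_gen z d)
  then show ?case by (intro exI[of _ z] exI[of _ "\<lambda>k. 0 \<odot> r"]) (simp add: level_zero)
next
  case (level_right e p k)
  define ps where "ps = (\<lambda>l. if l = k then p else 0)"
  have "(\<Sum>l<n. ps l \<odot> monomial [l]) = p \<odot> monomial [k]"
    using level_right by (subst sum_eq_single[where a=k]) (auto simp: ps_def)
  moreover have "\<forall>l<n. ideal_level n r e (ps l)"
    using level_right by (auto simp: ps_def intro: level_zero)
  ultimately show ?case by (intro exI[of _ "0 \<odot> r"] exI[of _ ps]) (auto simp: homog_eq)
next
  case (level_add e p q)
  then obtain z1 ps1 z2 ps2 where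
    1: "z1 \<in> homog n (e - 2)" "e < 2 \<longrightarrow> z1 = 0" "\<forall>k<n. ideal_level n r (e - 1) (ps1 k)"
       "p = z1 \<odot> r + (\<Sum>k<n. ps1 k \<odot> monomial [k])" and
    2: "z2 \<in> homog n (e - 2)" "e < 2 \<longrightarrow> z2 = 0" "\<forall>k<n. ideal_level n r (e - 1) (ps2 k)"
       "q = z2 \<odot> r + (\<Sum>k<n. ps2 k \<odot> monomial [k])"
    by blast
  have "p + q = (z1 + z2) \<odot> r + (\<Sum>k<n. (ps1 k + ps2 k) \<odot> monomial [k])"
    using 1(4) 2(4) by (simp add: tmult_add_left sum.distrib algebra_simps)
  then show ?case using 1 2
    by (intro exI[of _ "z1 + z2"] exI[of _ "\<lambda>k. ps1 k + ps2 k"]) (simp add: homog_add ideal_level.level_add)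
next
  case level_zero
  show ?case by (intro exI[of _ "0 \<odot> r"] exI[of _ "\<lambda>k. 0 \<odot> r"]) (simp add: homog_eq ideal_level.level_zero)
qed

lemma ideal_level_homogeneous: "ideal_level n r e p \<Longrightarrow> r \<in> homog n 2 \<Longrightarrow> homogeneous e p"
proof (induction rule: ideal_level.induct)
  case (level_gen z d)
  then show ?case
    using homogeneous_tmult[OF homog_homogeneous[OF level_gen(1)] homog_homogeneous[OF level_gen(2)]]
    by simp
next
  case (level_right e p k)
  then show ?case using homogeneous_tmult[OF _ homogeneous_monomial[of "[k]"]] by simp
qed (auto intro: homogeneous_add)

lemma ideal_level_deg_le: "ideal_level n r e p \<Longrightarrow> deg_le 2 r \<Longrightarrow> deg_le e p"
proof (induction rule: ideal_level.induct)
  case (level_gen z d)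
  then show ?case
    using deg_le_tmult[OF homogeneous_imp_deg_le[OF homog_homogeneous[OF level_gen(1)]] level_gen(2)]
    by simp
next
  case (level_right e p k)
  then show ?case
    using deg_le_tmult[OF _ homogeneous_imp_deg_le[OF homogeneous_monomial[of "[k]"]]] by simp
qed (auto intro: deg_le_add)

lemma ideal_upto_carrier: "ideal_upto n r e p \<Longrightarrow> r \<in> tens_carrier n \<Longrightarrow> p \<in> tens_carrier n"
  by (induction rule: ideal_upto.induct) (auto dest: ideal_level_carrier)

lemma ideal_level_imp_upto: "ideal_level n r e p \<Longrightarrow> ideal_upto n r e p"
  by (rule upto_level) auto

lemma ideal_upto_zero: "ideal_upto n r e 0"
  by (rule ideal_level_imp_upto[OF level_zero])

lemma ideal_upto_mono: "ideal_upto n r e p \<Longrightarrow> e \<le> e' \<Longrightarrow> ideal_upto n r e' p"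
  by (induction rule: ideal_upto.induct) (auto intro: upto_level upto_add)

lemma ideal_upto_smult: "ideal_upto n r e p \<Longrightarrow> ideal_upto n r e (smult c p)"
  by (induction rule: ideal_upto.induct) (auto intro: upto_level upto_add ideal_level_smult simp: smult_add)

lemma ideal_upto_diff: "ideal_upto n r e p \<Longrightarrow> ideal_upto n r e q \<Longrightarrow> ideal_upto n r e (p - q)"
  using upto_add[OF _ ideal_upto_smult[where c="-1"]] by (simp add: smult_minus_one)

lemma ideal_upto_sum:
  "(\<And>i. i \<in> A \<Longrightarrow> ideal_upto n r e (F i)) \<Longrightarrow> ideal_upto n r e (\<Sum>i\<in>A. F i)"
  by (induction A rule: infinite_finite_induct) (auto intro: upto_add ideal_upto_zero)

lemma ideal_upto_homog_right:
  "ideal_upto n r e p \<Longrightarrow> q \<in> homog n t \<Longrightarrow> ideal_upto n r (e + t) (p \<odot> q)"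
  by (induction rule: ideal_upto.induct)
    (auto simp: tmult_add_left intro: upto_add upto_level[OF ideal_level_homog_right])

lemma ideal_upto_homog_left:
  "ideal_upto n r e p \<Longrightarrow> q \<in> homog n t \<Longrightarrow> ideal_upto n r (t + e) (q \<odot> p)"
  by (induction rule: ideal_upto.induct)
    (auto simp: tmult_add_right intro: upto_add upto_level[OF ideal_level_homog_left])

lemma ideal_upto_mult_right:
  assumes "ideal_upto n r e p" "q \<in> tens_carrier n" "deg_le t q"
  shows "ideal_upto n r (e + t) (p \<odot> q)"
proof -
  have "ideal_upto n r (e + t) (\<Sum>d\<le>t. p \<odot> hcomp d q)"
    using assms by (auto intro!: ideal_upto_sum ideal_upto_mono[OF ideal_upto_homog_right] homog_hcomp)
  moreover have "p \<odot> q = (\<Sum>d\<le>t. p \<odot> hcomp d q)"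
    by (subst (1) sum_hcomp[OF assms(3), symmetric]) (rule tmult_sum_right)
  ultimately show ?thesis by simp
qed

lemma ideal_upto_mult_left:
  assumes "ideal_upto n r e p" "q \<in> tens_carrier n" "deg_le t q"
  shows "ideal_upto n r (t + e) (q \<odot> p)"
proof -
  have "ideal_upto n r (t + e) (\<Sum>d\<le>t. hcomp d q \<odot> p)"
    using assms by (auto intro!: ideal_upto_sum ideal_upto_mono[OF ideal_upto_homog_left] homog_hcomp)
  moreover have "q \<odot> p = (\<Sum>d\<le>t. hcomp d q \<odot> p)"
    by (subst (1) sum_hcomp[OF assms(3), symmetric]) (rule tmult_sum_left)
  ultimately show ?thesis by simp
qed

lemma ideal_upto_deg_le: "ideal_upto n r e p \<Longrightarrow> deg_le 2 r \<Longrightarrow> deg_le e p"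
  by (induction rule: ideal_upto.induct) (auto intro: deg_le_add dest: ideal_level_deg_le deg_le_mono)

lemma hcomp_ideal_upto_homog:
  assumes r: "r \<in> homog n 2"
  shows "ideal_upto n r e p \<Longrightarrow> ideal_level n r d (hcomp d p)"
proof (induction rule: ideal_upto.induct)
  case (upto_level d' p e)
  then show ?case using ideal_level_homogeneous[OF upto_level(1) r]
    by (cases "d' = d") (auto simp: hcomp_homogeneous hcomp_homogeneous_other level_zero)
qed (simp add: hcomp_add level_add)

lemma ideal_upto_Suc_split:
  "ideal_upto n r (Suc e) h \<Longrightarrow> \<exists>p q. ideal_level n r (Suc e) p \<and> ideal_upto n r e q \<and> h = p + q"
proof (induction "Suc e" h rule: ideal_upto.induct)
  case (upto_level d p)
  show ?case
  proof (cases "d = Suc e")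
    case True
    then show ?thesis using upto_level by (intro exI[of _ p] exI[of _ 0]) (auto intro: ideal_upto_zero)
  next
    case False
    then show ?thesis using upto_level
      by (intro exI[of _ 0] exI[of _ p]) (auto intro: level_zero ideal_upto.upto_level)
  qed
next
  case (upto_add p q)
  then obtain p1 q1 p2 q2 where "ideal_level n r (Suc e) p1" "ideal_upto n r e q1" "p = p1 + q1"
    "ideal_level n r (Suc e) p2" "ideal_upto n r e q2" "q = p2 + q2" by blast
  then show ?case
    by (intro exI[of _ "p1 + p2"] exI[of _ "q1 + q2"]) (auto intro: level_add ideal_upto.upto_add)
qed

lemma ideal_upto_union_ideal:
  assumes r: "r \<in> tens_carrier n"
  shows "ideal {h. \<exists>e. ideal_upto n r e h} (tensor_algebra n)"
proof -
  interpret R: ring "tensor_algebra n" by (rule ring_tensor_algebra)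
  let ?S = "{h. \<exists>e. ideal_upto n r e h}"
  have left: "x \<odot> h \<in> ?S" and right: "h \<odot> x \<in> ?S" if h: "h \<in> ?S" and x: "x \<in> tens_carrier n" for x h
  proof -
    obtain e where e: "ideal_upto n r e h" using h by blast
    obtain t where t: "deg_le t x" using tens_carrier_deg_le[OF x] by blast
    show "x \<odot> h \<in> ?S" using ideal_upto_mult_left[OF e x t] by blast
    show "h \<odot> x \<in> ?S" using ideal_upto_mult_right[OF e x t] by blast
  qed
  have "subgroup ?S (add_monoid (tensor_algebra n))"
  proof (rule R.add.subgroupI, goal_cases)
    case 1
    show ?case using ideal_upto_carrier r by auto
  next
    case 2
    show ?case using ideal_upto_zero by blast
  next
    case (3 a)
    then obtain e where e: "ideal_upto n r e a" by blast
    have "ideal_upto n r e (0 - a)" by (rule ideal_upto_diff[OF ideal_upto_zero e])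
    then show ?case using tensor_algebra_a_inv[OF ideal_upto_carrier[OF e r]] by (auto simp: a_inv_def)
  next
    case (4 a b)
    then obtain e1 e2 where "ideal_upto n r e1 a" "ideal_upto n r e2 b" by blast
    then have "ideal_upto n r (max e1 e2) a" "ideal_upto n r (max e1 e2) b"
      by (auto intro: ideal_upto_mono)
    then show ?case by (auto intro: upto_add)
  qed
  then show ?thesis
  proof (rule idealI[OF ring_tensor_algebra], goal_cases)
    case (1 a x)
    then show ?case using left by simp
  next
    case (2 a x)
    then show ?case using right by simp
  qed
qed

lemma ideal_upto_in_genideal:
  assumes "ideal_upto n r e p" and r: "r \<in> tens_carrier n"
  shows "p \<in> genideal (tensor_algebra n) {r}"
proof -
  interpret R: ring "tensor_algebra n" by (rule ring_tensor_algebra)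
  interpret I: ideal "genideal (tensor_algebra n) {r}" "tensor_algebra n"
    by (rule R.genideal_ideal) (use r in simp)
  have r_in: "r \<in> genideal (tensor_algebra n) {r}" by (rule R.genideal_self') (use r in simp)
  have level: "q \<in> genideal (tensor_algebra n) {r}" if "ideal_level n r d q" for d q
    using that
  proof (induction rule: ideal_level.induct)
    case (level_gen z d)
    then show ?case using I.I_l_closed[OF r_in, of z] homog_carrier[OF level_gen] by simp
  next
    case (level_right e p k)
    then show ?case
      using I.I_r_closed[OF level_right(3), of "monomial [k]"] homog_carrier[OF homog_letter[OF level_right(2)]]
      by simp
  next
    case (level_add e p q)
    then show ?case using I.a_closed[OF level_add(3,4)] by simp
  next
    case (level_zero e)
    then show ?case using I.zero_closed by simp
  qed
  from assms(1) show ?thesis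
  proof (induction rule: ideal_upto.induct)
    case (upto_add e p q)
    then show ?case using I.a_closed[OF upto_add(3,4)] by simp
  qed (rule level)
qed

lemma genideal_eq_ideal_upto:
  assumes r: "r \<in> tens_carrier n"
  shows "genideal (tensor_algebra n) {r} = {h. \<exists>e. ideal_upto n r e h}"
proof
  interpret R: ring "tensor_algebra n" by (rule ring_tensor_algebra)
  have "ideal_upto n r 2 r"
    using ideal_level_imp_upto[OF level_gen[OF homog_monomial_Nil, of n r]] by (simp add: numeral_2_eq_2)
  then show "genideal (tensor_algebra n) {r} \<subseteq> {h. \<exists>e. ideal_upto n r e h}"
    by (intro R.genideal_minimal[OF ideal_upto_union_ideal[OF r]]) auto
  show "{h. \<exists>e. ideal_upto n r e h} \<subseteq> genideal (tensor_algebra n) {r}"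
    using ideal_upto_in_genideal[OF _ r] by blast
qed

definition letter_form :: "nat \<Rightarrow> 'k::field tens \<Rightarrow> nat \<Rightarrow> 'k tens \<Rightarrow> bool" where
  "letter_form n r e x \<longleftrightarrow> (\<exists>ps q. (\<forall>k<n. ideal_level n r e (ps k)) \<and> ideal_upto n r e q \<and>
     x = (\<Sum>k<n. ps k \<odot> monomial [k]) + q)"

lemma letter_form_add: "letter_form n r e x \<Longrightarrow> letter_form n r e y \<Longrightarrow> letter_form n r e (x + y)"
proof -
  assume "letter_form n r e x" "letter_form n r e y"
  then obtain ps1 q1 ps2 q2 where
    1: "\<forall>k<n. ideal_level n r e (ps1 k)" "ideal_upto n r e q1" "x = (\<Sum>k<n. ps1 k \<odot> monomial [k]) + q1"
    and 2: "\<forall>k<n. ideal_level n r e (ps2 k)" "ideal_upto n r e q2" "y = (\<Sum>k<n. ps2 k \<odot> monomial [k]) + q2"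
    unfolding letter_form_def by blast
  have "x + y = (\<Sum>k<n. (ps1 k + ps2 k) \<odot> monomial [k]) + (q1 + q2)"
    using 1(3) 2(3) by (simp add: tmult_add_left sum.distrib algebra_simps)
  then show ?thesis unfolding letter_form_def using 1 2
    by (intro exI[of _ "\<lambda>k. ps1 k + ps2 k"] exI[of _ "q1 + q2"]) (simp add: level_add upto_add)
qed

lemma letter_form_letters:
  "(\<And>k. k < n \<Longrightarrow> ideal_level n r e (ps k)) \<Longrightarrow> letter_form n r e (\<Sum>k<n. ps k \<odot> monomial [k])"
  unfolding letter_form_def using ideal_upto_zero by (intro exI[of _ ps] exI[of _ 0]) simp

lemma letter_form_upto: "ideal_upto n r e q \<Longrightarrow> letter_form n r e q"
  unfolding letter_form_def by (intro exI[of _ "\<lambda>k. 0"] exI[of _ q]) (simp add: level_zero)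

section \<open>The associated graded algebra of a quotient\<close>

lemma filt_zero: "0 \<in> filt n m"
  by (simp add: filt_eq)

lemma filt_add: "u \<in> filt n m \<Longrightarrow> v \<in> filt n m \<Longrightarrow> u + v \<in> filt n m"
  by (auto simp: filt_eq intro: deg_le_add)

lemma filt_uminus: "u \<in> filt n m \<Longrightarrow> - u \<in> filt n m"
  by (auto simp: filt_eq intro: deg_le_uminus)

lemma filt_tmult: "u \<in> filt n i \<Longrightarrow> v \<in> filt n j \<Longrightarrow> u \<odot> v \<in> filt n (i + j)"
  by (auto simp: filt_eq intro: deg_le_tmult)

lemma hcomp_filt: "p \<in> tens_carrier n \<Longrightarrow> hcomp m p \<in> filt n m"
  by (simp add: filt_eq tens_carrier_hcomp deg_le_hcomp)

context
  fixes n :: nat and I :: "'k::field tens set"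
  assumes I: "ideal I (tensor_algebra n)"
begin

lemma tens_ideal_carrier: "x \<in> I \<Longrightarrow> x \<in> tens_carrier n"
  using ideal.Icarr[OF I] by simp

lemma tens_ideal_zero: "0 \<in> I"
  using additive_subgroup.zero_closed[OF ideal.axioms(1)[OF I]] by simp

lemma tens_ideal_add: "x \<in> I \<Longrightarrow> y \<in> I \<Longrightarrow> x + y \<in> I"
  using additive_subgroup.a_closed[OF ideal.axioms(1)[OF I]] by simp

lemma tens_ideal_uminus: "x \<in> I \<Longrightarrow> - x \<in> I"
  using additive_subgroup.a_inv_closed[OF ideal.axioms(1)[OF I]] tens_ideal_carrier
    tensor_algebra_a_inv by metis

lemma tens_ideal_diff_commute: "x - y \<in> I \<Longrightarrow> y - x \<in> I"
  using tens_ideal_uminus by fastforce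

lemma tens_ideal_sum: "(\<And>i. i \<in> A \<Longrightarrow> F i \<in> I) \<Longrightarrow> (\<Sum>i\<in>A. F i) \<in> I"
  by (induction A rule: infinite_finite_induct) (auto intro: tens_ideal_add tens_ideal_zero)

lemma tens_ideal_mult_right: "v \<in> I \<Longrightarrow> b \<in> tens_carrier n \<Longrightarrow> v \<odot> b \<in> I"
  using ideal.I_r_closed[OF I] by simp

lemma tens_ideal_mult_left: "v \<in> I \<Longrightarrow> b \<in> tens_carrier n \<Longrightarrow> b \<odot> v \<in> I"
  using ideal.I_l_closed[OF I] by simp

lemma lower_0: "lower n I 0 = I"
  by (simp add: lower_def)

lemma lower_Suc_iff: "x \<in> lower n I (Suc m) \<longleftrightarrow> (\<exists>u v. u \<in> filt n m \<and> v \<in> I \<and> x = u + v)"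
  by (auto simp: lower_def tens_add_eq)

lemma lower_add: "x \<in> lower n I m \<Longrightarrow> y \<in> lower n I m \<Longrightarrow> x + y \<in> lower n I m"
proof (cases m)
  case (Suc m')
  assume "x \<in> lower n I m" "y \<in> lower n I m"
  then obtain u1 v1 u2 v2 where "u1 \<in> filt n m'" "v1 \<in> I" "x = u1 + v1"
    "u2 \<in> filt n m'" "v2 \<in> I" "y = u2 + v2"
    using Suc lower_Suc_iff by blast
  then have "x + y = (u1 + u2) + (v1 + v2)" "u1 + u2 \<in> filt n m'" "v1 + v2 \<in> I"
    by (auto simp: algebra_simps filt_add tens_ideal_add)
  then show ?thesis using Suc lower_Suc_iff by blast
qed (simp add: lower_0 tens_ideal_add)

lemma lower_uminus: "x \<in> lower n I m \<Longrightarrow> - x \<in> lower n I m"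
proof (cases m)
  case (Suc m')
  assume "x \<in> lower n I m"
  then obtain u v where "u \<in> filt n m'" "v \<in> I" "x = u + v" using Suc lower_Suc_iff by blast
  then have "- x = (- u) + (- v)" "- u \<in> filt n m'" "- v \<in> I"
    by (auto simp: filt_uminus tens_ideal_uminus)
  then show ?thesis using Suc lower_Suc_iff by blast
qed (simp add: lower_0 tens_ideal_uminus)

lemma ideal_in_lower: "v \<in> I \<Longrightarrow> v \<in> lower n I m"
proof (cases m)
  case (Suc m')
  assume "v \<in> I"
  then show ?thesis using Suc lower_Suc_iff filt_zero[of n m'] by force
qed (simp add: lower_0)

lemma lower_zero: "0 \<in> lower n I m"
  by (rule ideal_in_lower[OF tens_ideal_zero])

lemma lower_sum: "(\<And>i. i \<in> A \<Longrightarrow> F i \<in> lower n I m) \<Longrightarrow> (\<Sum>i\<in>A. F i) \<in> lower n I m"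
  by (induction A rule: infinite_finite_induct) (auto intro: lower_add lower_zero)

lemma filt_in_lower_Suc: "u \<in> filt n m \<Longrightarrow> u \<in> lower n I (Suc m)"
  using lower_Suc_iff tens_ideal_zero by fastforce

lemma lower_tmult_right: "x \<in> lower n I i \<Longrightarrow> b \<in> filt n j \<Longrightarrow> x \<odot> b \<in> lower n I (i + j)"
proof (cases i)
  case 0
  assume "x \<in> lower n I i" "b \<in> filt n j"
  then show ?thesis using 0 tens_ideal_mult_right ideal_in_lower by (simp add: lower_0 filt_eq)
next
  case (Suc i')
  assume "x \<in> lower n I i" and b: "b \<in> filt n j"
  then obtain u v where uv: "u \<in> filt n i'" "v \<in> I" "x = u + v" using Suc lower_Suc_iff by blast
  have "u \<odot> b \<in> filt n (i' + j)" using filt_tmult[OF uv(1) b] .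
  moreover have "v \<odot> b \<in> I" using tens_ideal_mult_right[OF uv(2)] b by (simp add: filt_eq)
  ultimately show ?thesis using Suc uv(3) lower_Suc_iff by (auto simp: tmult_add_left)
qed

lemma lower_tmult_left: "x \<in> lower n I i \<Longrightarrow> b \<in> filt n j \<Longrightarrow> b \<odot> x \<in> lower n I (j + i)"
proof (cases i)
  case 0
  assume "x \<in> lower n I i" "b \<in> filt n j"
  then show ?thesis using 0 tens_ideal_mult_left ideal_in_lower by (simp add: lower_0 filt_eq)
next
  case (Suc i')
  assume "x \<in> lower n I i" and b: "b \<in> filt n j"
  then obtain u v where uv: "u \<in> filt n i'" "v \<in> I" "x = u + v" using Suc lower_Suc_iff by blast
  have "b \<odot> u \<in> filt n (j + i')" using filt_tmult[OF b uv(1)] .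
  moreover have "b \<odot> v \<in> I" using tens_ideal_mult_left[OF uv(2)] b by (simp add: filt_eq)
  ultimately show ?thesis using Suc uv(3) lower_Suc_iff by (auto simp: tmult_add_right)
qed

lemma gcoset_self: "x \<in> gcoset n I m x"
  using lower_zero by (auto simp: gcoset_def tens_add_eq intro!: exI[of _ 0])

lemma gcoset_eq_iff: "gcoset n I m x = gcoset n I m y \<longleftrightarrow> x - y \<in> lower n I m"
proof
  assume "gcoset n I m x = gcoset n I m y"
  then obtain z where "z \<in> lower n I m" "x = y + z"
    using gcoset_self[of x m] by (auto simp: gcoset_def tens_add_eq)
  then show "x - y \<in> lower n I m" by simp
next
  have sub: "gcoset n I m x \<subseteq> gcoset n I m y" if d: "x - y \<in> lower n I m" for x y
  proof
    fix u assume "u \<in> gcoset n I m x"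
    then obtain z where z: "z \<in> lower n I m" "u = x + z" by (auto simp: gcoset_def tens_add_eq)
    then have "u = y + ((x - y) + z)" by simp
    moreover have "(x - y) + z \<in> lower n I m" using lower_add[OF d z(1)] .
    ultimately show "u \<in> gcoset n I m y" unfolding gcoset_def tens_add_eq by blast
  qed
  assume "x - y \<in> lower n I m"
  moreover then have "y - x \<in> lower n I m" using lower_uminus by fastforce
  ultimately show "gcoset n I m x = gcoset n I m y" using sub by blast
qed

lemma gcoset_zero: "gcoset n I m 0 = lower n I m"
  by (auto simp: gcoset_def tens_add_eq)

lemma grrep_gcoset:
  assumes x: "x \<in> filt n m"
  shows "grrep n m (gcoset n I m x) \<in> filt n m" "grrep n m (gcoset n I m x) - x \<in> lower n I m"
proof -
  have "\<exists>y. y \<in> filt n m \<and> y \<in> gcoset n I m x"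
    using x gcoset_self by blast
  then have "grrep n m (gcoset n I m x) \<in> filt n m \<and> grrep n m (gcoset n I m x) \<in> gcoset n I m x"
    unfolding grrep_def by (rule someI_ex)
  then show "grrep n m (gcoset n I m x) \<in> filt n m" "grrep n m (gcoset n I m x) - x \<in> lower n I m"
    by (auto simp: gcoset_def tens_add_eq)
qed

lemma gcoset_hcomp: "x \<in> filt n m \<Longrightarrow> gcoset n I m (hcomp m x) = gcoset n I m x"
proof (cases m)
  case 0
  assume "x \<in> filt n m"
  then have "hcomp m x = x" using 0 by (auto simp: filt_eq deg_le_def hcomp_apply fun_eq_iff)
  then show ?thesis by simp
next
  case (Suc j)
  assume "x \<in> filt n m"
  then have "x - hcomp m x \<in> filt n j"
    using Suc deg_le_diff_hcomp by (auto simp: filt_eq)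
  then show ?thesis using Suc gcoset_eq_iff filt_in_lower_Suc by metis
qed

end

definition gr_map :: "nat \<Rightarrow> 'k::field tens set \<Rightarrow> 'k tens \<Rightarrow> nat \<Rightarrow> 'k tens set" where
  "gr_map n I p = (\<lambda>m. gcoset n I m (hcomp m p))"

context
  fixes n :: nat and I :: "'k::field tens set"
  assumes I: "ideal I (tensor_algebra n)"
begin

lemma gr_map_mult:
  assumes p: "p \<in> tens_carrier n" and q: "q \<in> tens_carrier n"
  shows "gr_map n I (p \<odot> q) = mult (assoc_graded n I) (gr_map n I p) (gr_map n I q)"
proof (rule ext)
  fix m
  define x where "x i = grrep n i (gcoset n I i (hcomp i p))" for i
  define y where "y i = grrep n i (gcoset n I i (hcomp i q))" for i
  have x: "x i - hcomp i p \<in> lower n I i" for i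
    using grrep_gcoset[OF I hcomp_filt[OF p]] by (simp add: x_def)
  have y: "y i \<in> filt n i" "y i - hcomp i q \<in> lower n I i" for i
    using grrep_gcoset[OF I hcomp_filt[OF q]] by (simp_all add: y_def)
  have "(\<lambda>w. \<Sum>i\<le>m. (x i \<odot> y (m - i)) w) = (\<Sum>i\<le>m. x i \<odot> y (m - i))"
    by (simp add: fun_eq_iff sum_fun_apply)
  then have rhs: "mult (assoc_graded n I) (gr_map n I p) (gr_map n I q) m
      = gcoset n I m (\<Sum>i\<le>m. x i \<odot> y (m - i))"
    by (simp add: assoc_graded_def gr_map_def x_def y_def)
  have "(\<Sum>i\<le>m. x i \<odot> y (m - i)) - hcomp m (p \<odot> q)
      = (\<Sum>i\<le>m. (x i - hcomp i p) \<odot> y (m - i) + hcomp i p \<odot> (y (m - i) - hcomp (m - i) q))"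
    by (simp add: hcomp_tmult sum_subtractf[symmetric] tmult_diff_left tmult_diff_right)
  also have "\<dots> \<in> lower n I m"
  proof (rule lower_sum[OF I])
    fix i assume "i \<in> {..m}"
    then have "i + (m - i) = m" by simp
    then show "(x i - hcomp i p) \<odot> y (m - i) + hcomp i p \<odot> (y (m - i) - hcomp (m - i) q) \<in> lower n I m"
      using lower_tmult_right[OF I x y(1)] lower_tmult_left[OF I y(2) hcomp_filt[OF p]]
      by (metis lower_add[OF I])
  qed
  finally have "gcoset n I m (\<Sum>i\<le>m. x i \<odot> y (m - i)) = gcoset n I m (hcomp m (p \<odot> q))"
    using gcoset_eq_iff[OF I] by blast
  then show "gr_map n I (p \<odot> q) m = mult (assoc_graded n I) (gr_map n I p) (gr_map n I q) m"
    using rhs by (simp add: gr_map_def)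
qed

lemma gr_map_add:
  assumes p: "p \<in> tens_carrier n" and q: "q \<in> tens_carrier n"
  shows "gr_map n I (p + q) = add (assoc_graded n I) (gr_map n I p) (gr_map n I q)"
proof (rule ext)
  fix m
  define x where "x = grrep n m (gcoset n I m (hcomp m p))"
  define y where "y = grrep n m (gcoset n I m (hcomp m q))"
  have "x - hcomp m p \<in> lower n I m" "y - hcomp m q \<in> lower n I m"
    using grrep_gcoset[OF I hcomp_filt[OF p]] grrep_gcoset[OF I hcomp_filt[OF q]]
    by (simp_all add: x_def y_def)
  then have "(x - hcomp m p) + (y - hcomp m q) \<in> lower n I m"
    by (rule lower_add[OF I])
  moreover have "(x - hcomp m p) + (y - hcomp m q) = (x + y) - hcomp m (p + q)"
    by (simp add: hcomp_add)
  ultimately have "gcoset n I m (x + y) = gcoset n I m (hcomp m (p + q))"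
    using gcoset_eq_iff[OF I] by simp
  then show "gr_map n I (p + q) m = add (assoc_graded n I) (gr_map n I p) (gr_map n I q) m"
    by (simp add: assoc_graded_def gr_map_def x_def y_def tens_add_eq)
qed

lemma gr_map_one: "gr_map n I (monomial []) = one (assoc_graded n I)"
  by (simp add: fun_eq_iff gr_map_def assoc_graded_def hcomp_monomial_Nil tens_const_eq tens_zero_eq)

lemma gr_map_const: "gr_map n I (tens_const c) = gr_scalar n I c"
  by (simp add: fun_eq_iff gr_map_def gr_scalar_def tens_const_eq hcomp_smult hcomp_monomial_Nil
      tens_zero_eq)

lemma gr_map_eq_lower: "hcomp m p = 0 \<Longrightarrow> gr_map n I p m = lower n I m"
  by (simp add: gr_map_def gcoset_zero[OF I])

lemma gr_map_carrier:
  assumes p: "p \<in> tens_carrier n"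
  shows "gr_map n I p \<in> carrier (assoc_graded n I)"
proof -
  obtain B where B: "deg_le B p" using tens_carrier_deg_le[OF p] by blast
  have "{m. gr_map n I p m \<noteq> lower n I m} \<subseteq> {..B}"
    using hcomp_deg_gt[OF B] gr_map_eq_lower by (auto simp: not_le[symmetric])
  then have "finite {m. gr_map n I p m \<noteq> lower n I m}" by (rule finite_subset) simp
  moreover have "\<forall>m. \<exists>x\<in>filt n m. gr_map n I p m = gcoset n I m x"
    using hcomp_filt[OF p] by (auto simp: gr_map_def)
  ultimately show ?thesis by (simp add: assoc_graded_def)
qed

lemma gr_map_surj:
  assumes d: "d \<in> carrier (assoc_graded n I)"
  obtains p where "p \<in> tens_carrier n" "gr_map n I p = d"
    "\<And>m. (\<forall>j. j \<noteq> m \<longrightarrow> d j = lower n I j) \<Longrightarrow> p \<in> homog n m"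
proof -
  obtain xs where xs: "\<And>m. xs m \<in> filt n m" "\<And>m. d m = gcoset n I m (xs m)"
    using d by (simp add: assoc_graded_def) metis
  define S where "S = {m. d m \<noteq> lower n I m}"
  have S: "finite S" using d by (simp add: assoc_graded_def S_def)
  define p where "p = (\<Sum>m\<in>S. hcomp m (xs m))"
  have xc: "xs m \<in> tens_carrier n" for m using xs(1) by (simp add: filt_eq)
  have hcomp_p: "hcomp j p = (if j \<in> S then hcomp j (xs j) else 0)" for j
    using S by (simp add: p_def hcomp_sum hcomp_hcomp sum.delta' if_distrib[of "hcomp j"] cong: if_cong)
  have "gr_map n I p = d"
  proof (rule ext)
    fix j
    show "gr_map n I p j = d j"
      using gcoset_hcomp[OF I xs(1)] xs(2) gcoset_zero[OF I]
      by (cases "j \<in> S") (simp_all add: gr_map_def hcomp_p S_def)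
  qed
  moreover have "p \<in> homog n m" if "\<forall>j. j \<noteq> m \<longrightarrow> d j = lower n I j" for m
  proof -
    have "S \<subseteq> {m}" using that by (auto simp: S_def)
    then show ?thesis unfolding p_def using xc by (intro homog_sum) (auto intro: homog_hcomp)
  qed
  moreover have "p \<in> tens_carrier n" unfolding p_def using xc by blast
  ultimately show ?thesis using that by blast
qed

end


section \<open>The quadratic relation and its deformation\<close>

lemma quad_elem_eq: "quad_elem n M = (\<Sum>j<n. (\<Sum>i<n. smult (M i j) (monomial [i])) \<odot> monomial [j])"
proof -
  have "quad_elem n M = (\<Sum>i<n. \<Sum>j<n. smult (M i j) (monomial [i, j]))"
    by (simp add: fun_eq_iff quad_elem_def sum_fun_apply smult_monomial_apply)
  also have "\<dots> = (\<Sum>j<n. \<Sum>i<n. smult (M i j) (monomial [i, j]))"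
    by (rule sum.swap)
  finally show ?thesis
    by (simp add: tmult_sum_left tmult_smult_left monomial_tmult_monomial)
qed

lemma lin_elem_eq: "lin_elem n a = (\<Sum>i<n. smult (a i) (monomial [i]))"
  by (simp add: fun_eq_iff lin_elem_def sum_fun_apply smult_monomial_apply)

lemma homog_lin_comb: "(\<Sum>i<n. smult (u i) (monomial [i])) \<in> homog n 1"
  by (intro homog_sum homog_smult homog_letter) simp

text \<open>The relation \<open>g = f - v - c\<close> of the theorem is \<open>grel = frel - lowpart\<close>; only the
  facts that \<open>lowpart\<close> has degree at most one and that \<open>M\<close> is invertible (with inverse \<open>N\<close>)
  are used.\<close>

locale pbw_data =
  fixes n :: nat and M N :: "nat \<Rightarrow> nat \<Rightarrow> 'k::field" and lowpart :: "'k tens"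
  assumes n_pos: "n \<ge> 1"
    and M_N: "\<And>i k. i < n \<Longrightarrow> k < n \<Longrightarrow> (\<Sum>j<n. M i j * N j k) = (if i = k then 1 else 0)"
    and N_M: "\<And>i k. i < n \<Longrightarrow> k < n \<Longrightarrow> (\<Sum>j<n. N i j * M j k) = (if i = k then 1 else 0)"
    and lowpart_carrier: "lowpart \<in> tens_carrier n"
    and lowpart_deg_le: "deg_le 1 lowpart"
begin

definition frel :: "'k tens" where
  "frel = quad_elem n M"

definition grel :: "'k tens" where
  "grel = frel - lowpart"

lemma frel_homog: "frel \<in> homog n 2"
proof -
  have "(\<Sum>i<n. smult (M i j) (monomial [i])) \<odot> monomial [j] \<in> homog n (1 + 1)" if "j < n" for j
    by (rule homog_tmult[OF homog_lin_comb homog_letter[OF that]])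
  then show ?thesis unfolding frel_def quad_elem_eq by (intro homog_sum) (simp add: numeral_2_eq_2)
qed

lemma frel_carrier: "frel \<in> tens_carrier n"
  using frel_homog by (rule homog_carrier)

lemma grel_carrier: "grel \<in> tens_carrier n"
  unfolding grel_def using frel_carrier lowpart_carrier by blast

lemma grel_deg_le: "deg_le 2 grel"
  unfolding grel_def
  using homogeneous_imp_deg_le[OF homog_homogeneous[OF frel_homog]] deg_le_mono[OF lowpart_deg_le]
  by (intro deg_le_diff) auto

lemma frel_nonzero: "frel \<noteq> 0"
proof
  assume "frel = 0"
  have "(\<Sum>j<n. M 0 j * N j 0) = 1" using M_N[of 0 0] n_pos by simp
  then obtain j where j: "j < n" "M 0 j \<noteq> 0"
    by (metis (no_types, lifting) mult_zero_left sum.neutral zero_neq_one lessThan_iff)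
  have "frel [0, j] = M 0 j"
    using j n_pos unfolding frel_def quad_elem_def
    by (subst sum_eq_single[where a=0]) (auto simp: sum_eq_single[where a=j])
  then show False using \<open>frel = 0\<close> j by (simp add: zero_fun_apply)
qed

lemma tmult_frel: "z \<odot> frel = (\<Sum>j<n. (\<Sum>i<n. smult (M i j) (z \<odot> monomial [i])) \<odot> monomial [j])"
  unfolding frel_def quad_elem_eq
  by (simp add: tmult_sum_right tmult_assoc[symmetric] tmult_sum_left tmult_smult_right tmult_smult_left)

lemma rquot_tmult_frel: "k < n \<Longrightarrow> rquot k (z \<odot> frel) = (\<Sum>i<n. smult (M i k) (z \<odot> monomial [i]))"
  unfolding tmult_frel by (rule rquot_sum_letters)

lemma rquot_frel_decomp:
  "l < n \<Longrightarrow> rquot l (z \<odot> frel + (\<Sum>k<n. ps k \<odot> monomial [k]))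
    = (\<Sum>i<n. smult (M i l) (z \<odot> monomial [i])) + ps l"
  by (simp add: rquot_add rquot_tmult_frel rquot_sum_letters)

lemma hcomp_tmult_grel: "z \<in> homog n d \<Longrightarrow> hcomp (Suc (Suc d)) (z \<odot> grel) = z \<odot> frel"
proof -
  assume z: "z \<in> homog n d"
  have "homogeneous (d + 2) (z \<odot> frel)"
    by (rule homogeneous_tmult[OF homog_homogeneous[OF z] homog_homogeneous[OF frel_homog]])
  moreover have "deg_le (d + 1) (z \<odot> lowpart)"
    by (rule deg_le_tmult[OF homogeneous_imp_deg_le[OF homog_homogeneous[OF z]] lowpart_deg_le])
  ultimately show ?thesis
    by (simp add: grel_def tmult_diff_right hcomp_diff hcomp_homogeneous hcomp_deg_gt)
qed

lemma hcomp_ideal_level_grel: "ideal_level n grel e p \<Longrightarrow> ideal_level n frel e (hcomp e p)"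
proof (induction rule: ideal_level.induct)
  case (level_gen z d)
  then show ?case using ideal_level.level_gen[OF level_gen] by (simp add: hcomp_tmult_grel)
next
  case (level_right e p k)
  then show ?case using ideal_level.level_right by (fastforce simp: hcomp_tmult_letter)
qed (auto simp: hcomp_add intro: ideal_level.intros)

lemma ideal_level_frel_lift: "ideal_level n frel e p \<Longrightarrow> \<exists>q. ideal_level n grel e q \<and> hcomp e q = p"
proof (induction rule: ideal_level.induct)
  case (level_gen z d)
  then show ?case using ideal_level.level_gen[OF level_gen] hcomp_tmult_grel[OF level_gen] by blast
next
  case (level_right e p k)
  then show ?case using ideal_level.level_right by (fastforce simp: hcomp_tmult_letter)
next
  case (level_add e p q)
  then show ?case using ideal_level.level_add by (fastforce simp: hcomp_add)
qed (use ideal_level.level_zero in fastforce)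

lemma inverse_matrix_combination:
  assumes j: "j < n"
  shows "(\<Sum>l<n. smult (N l j) (smult (c l) X + (\<Sum>i<n. smult (M i l) (Z \<odot> monomial [i]))))
       = smult (\<Sum>l<n. c l * N l j) X + Z \<odot> monomial [j]"
proof -
  have "(\<Sum>l<n. smult (N l j) (smult (c l) X + (\<Sum>i<n. smult (M i l) (Z \<odot> monomial [i]))))
      = (\<Sum>l<n. smult (c l * N l j) X + (\<Sum>i<n. smult (M i l * N l j) (Z \<odot> monomial [i])))"
    by (intro sum.cong refl) (simp add: smult_add smult_sum smult_smult mult.commute)
  also have "\<dots> = smult (\<Sum>l<n. c l * N l j) X
      + (\<Sum>l<n. \<Sum>i<n. smult (M i l * N l j) (Z \<odot> monomial [i]))"
    by (simp add: sum.distrib sum_smult_left)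
  also have "(\<Sum>l<n. \<Sum>i<n. smult (M i l * N l j) (Z \<odot> monomial [i]))
      = (\<Sum>i<n. \<Sum>l<n. smult (M i l * N l j) (Z \<odot> monomial [i]))"
    by (rule sum.swap)
  also have "\<dots> = (\<Sum>i<n. smult (if i = j then 1 else 0) (Z \<odot> monomial [i]))"
    using M_N j by (intro sum.cong refl) (simp add: sum_smult_left)
  also have "\<dots> = Z \<odot> monomial [j]"
    using j by (subst sum_eq_single[where a=j]) auto
  finally show ?thesis .
qed

lemma row_times_N_nonzero:
  assumes j1: "j1 < n" and nz: "\<mu> j1 \<noteq> 0"
  shows "\<exists>j<n. (\<Sum>l<n. \<mu> l * N l j) \<noteq> 0"
proof (rule ccontr)
  assume "\<not> (\<exists>j<n. (\<Sum>l<n. \<mu> l * N l j) \<noteq> 0)"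
  then have "0 = (\<Sum>j<n. (\<Sum>l<n. \<mu> l * N l j) * M j j1)" by simp
  also have "\<dots> = (\<Sum>j<n. \<Sum>l<n. \<mu> l * (N l j * M j j1))"
    by (simp add: sum_distrib_right mult.assoc)
  also have "\<dots> = (\<Sum>l<n. \<Sum>j<n. \<mu> l * (N l j * M j j1))"
    by (rule sum.swap)
  also have "\<dots> = (\<Sum>l<n. \<mu> l * (if l = j1 then 1 else 0))"
    using N_M j1 by (intro sum.cong refl) (simp add: sum_distrib_left[symmetric])
  also have "\<dots> = \<mu> j1"
    using j1 by (subst sum_eq_single[where a=j1]) auto
  finally show False using nz by simp
qed

lemma M_column_nonzero: "\<exists>j<n. M j 0 \<noteq> 0"
proof (rule ccontr)
  assume "\<not> (\<exists>j<n. M j 0 \<noteq> 0)"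
  then have "(\<Sum>j<n. N 0 j * M j 0) = 0" by simp
  then show False using N_M[of 0 0] n_pos by simp
qed

section \<open>Right multiplication by a nonzero vector is injective modulo \<open>(f)\<close>\<close>

text \<open>Eliminating \<open>x\<close> between two of the relations produces \<open>z v\<close> for a nonzero vector \<open>v\<close>,
  which is where the hypothesis \<open>n \<ge> 2\<close> enters.\<close>

lemma letter_system_ideal_level:
  assumes n2: "n \<ge> 2"
    and cancel: "\<And>v. v \<in> homog n 1 \<Longrightarrow> v \<noteq> 0 \<Longrightarrow> ideal_level n frel (Suc m) (z \<odot> v) \<Longrightarrow>
      ideal_level n frel m z"
    and j0: "j0 < n" "\<nu> j0 \<noteq> 0"
    and sys: "\<And>j. j < n \<Longrightarrow> ideal_level n frel (Suc m) (smult (\<nu> j) x + z \<odot> monomial [j])"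
  shows "ideal_level n frel m z \<and> ideal_level n frel (Suc m) x"
proof -
  define j1 where "j1 = (if j0 = 0 then 1 else (0::nat))"
  have j1: "j1 < n" "j1 \<noteq> j0" using n2 by (auto simp: j1_def)
  define v where "v = smult (\<nu> j0) (monomial [j1]) + smult (- \<nu> j1) (monomial [j0])"
  have v_homog: "v \<in> homog n 1"
    unfolding v_def using j0 j1 by (intro homog_add homog_smult homog_letter)
  have "v [j1] = \<nu> j0"
    using j1 by (simp add: v_def plus_fun_apply smult_monomial_apply)
  then have v_nonzero: "v \<noteq> 0" using j0 by (auto simp: zero_fun_apply)
  have "z \<odot> v = smult (\<nu> j0) (smult (\<nu> j1) x + z \<odot> monomial [j1])
      - smult (\<nu> j1) (smult (\<nu> j0) x + z \<odot> monomial [j0])"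
    by (simp add: v_def tmult_add_right tmult_smult_right fun_eq_iff smult_apply plus_fun_apply
        minus_apply algebra_simps)
  then have "ideal_level n frel (Suc m) (z \<odot> v)"
    using sys j0 j1 by (simp add: ideal_level_diff ideal_level_smult)
  then have z: "ideal_level n frel m z"
    by (rule cancel[OF v_homog v_nonzero])
  have "ideal_level n frel (Suc m) ((smult (\<nu> j0) x + z \<odot> monomial [j0]) - z \<odot> monomial [j0])"
    by (rule ideal_level_diff[OF sys[OF j0(1)] level_right[OF z j0(1)]])
  then have "ideal_level n frel (Suc m) (smult (inverse (\<nu> j0)) (smult (\<nu> j0) x))"
    by (simp add: ideal_level_smult)
  then show ?thesis using z smult_inverse[OF j0(2)] by simp
qed

text \<open>Taking right quotients by the letters and multiplying by \<open>N = M\<^sup>-\<^sup>1\<close> produces the relations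
  required by the previous lemma.\<close>

lemma ideal_level_frel_right_cancel:
  assumes n2: "n \<ge> 2"
  shows "x \<in> homog n m \<Longrightarrow> v \<in> homog n 1 \<Longrightarrow> v \<noteq> 0 \<Longrightarrow>
    ideal_level n frel (Suc m) (x \<odot> v) \<Longrightarrow> ideal_level n frel m x"
proof (induction m arbitrary: x v)
  case (0 x v)
  obtain l where l: "l < n" "v [l] \<noteq> 0" using homog_1_nonzero_coeff[OF 0(2,3)] .
  have "x \<odot> v = 0" using ideal_level_below_2[OF 0(4)] by simp
  then have "smult (v [l]) x = 0" using rquot_tmult_homog_1[OF 0(2), of l x] by simp
  then have "x = 0" by (metis l(2) smult_inverse smult_zero(2))
  then show ?case by (simp add: level_zero)
next
  case (Suc m x v)
  obtain z ps where z: "z \<in> homog n m" and ps: "\<forall>k<n. ideal_level n frel (Suc m) (ps k)"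
    and xv: "x \<odot> v = z \<odot> frel + (\<Sum>k<n. ps k \<odot> monomial [k])"
    using ideal_level_decomp[OF Suc.prems(4)] by auto
  have ps_eq: "ps l = smult (v [l]) x + (\<Sum>i<n. smult (M i l) ((- z) \<odot> monomial [i]))" if l: "l < n" for l
  proof -
    let ?S = "\<Sum>i<n. smult (M i l) (z \<odot> monomial [i])"
    have "smult (v [l]) x = rquot l (x \<odot> v)"
      by (simp add: rquot_tmult_homog_1[OF Suc.prems(2)])
    also have "\<dots> = ?S + ps l"
      unfolding xv by (rule rquot_frel_decomp[OF l])
    finally have "ps l = smult (v [l]) x - ?S" by (simp add: eq_diff_eq add.commute)
    moreover have "(\<Sum>i<n. smult (M i l) ((- z) \<odot> monomial [i])) = - ?S"
      by (simp add: tmult_minus_left smult_uminus sum_negf)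
    ultimately show ?thesis by simp
  qed
  define \<nu> where "\<nu> j = (\<Sum>l<n. v [l] * N l j)" for j
  have sys: "ideal_level n frel (Suc m) (smult (\<nu> j) x + (- z) \<odot> monomial [j])" if j: "j < n" for j
  proof -
    have "ideal_level n frel (Suc m) (\<Sum>l<n. smult (N l j) (ps l))"
      using ps by (auto intro!: ideal_level_sum ideal_level_smult)
    moreover have "(\<Sum>l<n. smult (N l j) (ps l)) = smult (\<nu> j) x + (- z) \<odot> monomial [j]"
      using inverse_matrix_combination[OF j, of "\<lambda>l. v [l]" x "- z"] ps_eq by (simp add: \<nu>_def)
    ultimately show ?thesis by simp
  qed
  obtain l where "l < n" "v [l] \<noteq> 0" using homog_1_nonzero_coeff[OF Suc.prems(2,3)] .
  then obtain j0 where j0: "j0 < n" "\<nu> j0 \<noteq> 0"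
    using row_times_N_nonzero[of l "\<lambda>l. v [l]"] by (auto simp: \<nu>_def)
  show ?case
    using letter_system_ideal_level[OF n2 Suc.IH[OF homog_uminus[OF z]] j0 sys] by simp
qed

section \<open>Resolving the overlap of \<open>f\<close> with \<open>g\<close>\<close>

lemma ideal_upto_grel_self: "ideal_upto n grel 2 grel"
  using ideal_level_imp_upto[OF level_gen[OF homog_monomial_Nil, of n grel]] by (simp add: numeral_2_eq_2)

text \<open>The overlap identity \<open>u f b g = u g b f + (u l b g - u g b l)\<close> with \<open>l = lowpart\<close>: the first
  term ends in letters because \<open>f\<close> does, and the bracket lies in lower levels.\<close>

lemma letter_form_overlap:
  assumes u: "u \<in> homog n d" and b: "b \<in> homog n t"
  shows "letter_form n grel (Suc (Suc d) + t + 1) (u \<odot> frel \<odot> b \<odot> grel)"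
proof -
  let ?E = "Suc (Suc d) + t + 1"
  have ugb: "ideal_level n grel (Suc (Suc d) + t) (u \<odot> grel \<odot> b)"
    by (rule ideal_level_homog_right[OF b level_gen[OF u]])
  have "u \<odot> grel \<odot> b \<odot> frel
      = (\<Sum>j<n. (\<Sum>i<n. smult (M i j) (u \<odot> grel \<odot> b \<odot> monomial [i])) \<odot> monomial [j])"
    by (rule tmult_frel)
  then have main: "letter_form n grel ?E (u \<odot> grel \<odot> b \<odot> frel)"
    using level_right[OF ugb] by (auto intro!: letter_form_letters ideal_level_sum ideal_level_smult)
  have ulb: "u \<odot> lowpart \<odot> b \<in> tens_carrier n"
    using homog_carrier[OF u] lowpart_carrier homog_carrier[OF b] by blast
  have ulb_deg: "deg_le (d + 1 + t) (u \<odot> lowpart \<odot> b)"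
    using deg_le_tmult[OF deg_le_tmult[OF homogeneous_imp_deg_le[OF homog_homogeneous[OF u]]
        lowpart_deg_le] homogeneous_imp_deg_le[OF homog_homogeneous[OF b]]] .
  have "ideal_upto n grel ?E (u \<odot> lowpart \<odot> b \<odot> grel)"
    using ideal_upto_mult_left[OF ideal_upto_grel_self ulb ulb_deg] by simp
  moreover have "ideal_upto n grel ?E (u \<odot> grel \<odot> b \<odot> lowpart)"
    by (rule ideal_upto_mult_right[OF ideal_level_imp_upto[OF ugb] lowpart_carrier lowpart_deg_le])
  ultimately have "letter_form n grel ?E
      (u \<odot> grel \<odot> b \<odot> frel + (u \<odot> lowpart \<odot> b \<odot> grel - u \<odot> grel \<odot> b \<odot> lowpart))"
    by (intro letter_form_add[OF main] letter_form_upto ideal_upto_diff)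
  moreover have "frel = grel + lowpart" by (simp add: grel_def)
  then have "u \<odot> frel \<odot> b \<odot> grel
      = u \<odot> grel \<odot> b \<odot> frel + (u \<odot> lowpart \<odot> b \<odot> grel - u \<odot> grel \<odot> b \<odot> lowpart)"
    by (simp only: tmult_add_left tmult_add_right) (simp add: algebra_simps)
  ultimately show ?thesis by simp
qed

lemma ideal_level_frel_overlap:
  "ideal_level n frel d z \<Longrightarrow> b \<in> homog n t \<Longrightarrow> letter_form n grel (d + t + 1) (z \<odot> b \<odot> grel)"
proof (induction arbitrary: b t rule: ideal_level.induct)
  case (level_gen u d)
  then show ?case by (rule letter_form_overlap)
next
  case (level_right e p k)
  have "monomial [k] \<odot> b \<in> homog n (1 + t)" using level_right by (intro homog_tmult homog_letter)
  then have "letter_form n grel (e + (1 + t) + 1) (p \<odot> (monomial [k] \<odot> b) \<odot> grel)"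
    by (rule level_right.IH)
  then show ?case by (simp add: tmult_assoc)
next
  case (level_add e p q)
  then show ?case
    using letter_form_add[OF level_add.IH(1)[OF level_add(5)] level_add.IH(2)[OF level_add(5)]]
    by (simp add: tmult_add_left)
next
  case (level_zero e)
  then show ?case using letter_form_upto[OF ideal_upto_zero] by simp
qed

section \<open>One generator\<close>

lemma homog_single_letter:
  assumes n: "n = 1" and z: "z \<in> homog n d"
  shows "z = smult (z (replicate d 0)) (monomial (replicate d 0))"
proof (rule ext)
  fix w
  show "z w = smult (z (replicate d 0)) (monomial (replicate d 0)) w"
  proof (cases "z w = 0")
    case False
    then have "length w = d" "set w \<subseteq> {0}"
      using z tens_carrierD[OF homog_carrier[OF z] False] n by (auto simp: homog_eq homogeneous_def)
    then have "w = replicate d 0" by (intro replicate_eqI) auto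
    then show ?thesis by (simp add: smult_monomial_apply)
  qed (auto simp: smult_monomial_apply)
qed

lemma ideal_level_grel_single_letter:
  assumes n: "n = 1"
  shows "ideal_level n grel e p \<Longrightarrow>
    \<exists>C. p = smult C (monomial (replicate (e - 2) 0) \<odot> grel) \<and> (e < 2 \<longrightarrow> C = 0)"
proof (induction rule: ideal_level.induct)
  case (level_gen z d)
  have "z \<odot> grel = smult (z (replicate d 0)) (monomial (replicate d 0) \<odot> grel)"
    by (subst homog_single_letter[OF n level_gen]) (simp add: tmult_smult_left)
  then show ?case by auto
next
  case (level_right e p k)
  then obtain C where C: "p = smult C (monomial (replicate (e - 2) 0) \<odot> grel)" "e < 2 \<longrightarrow> C = 0"
    by blast
  have k: "k = 0" using level_right n by simp
  show ?case
  proof (cases "e < 2")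
    case True
    then show ?thesis using C by (intro exI[of _ 0]) simp
  next
    case False
    have "p \<odot> monomial [k] = smult C (monomial (replicate (e - 2) 0) \<odot> (grel \<odot> monomial [0]))"
      using C k by (simp add: tmult_smult_left tmult_assoc)
    also have "\<dots> = smult C (monomial (replicate (e - 2) 0 @ [0]) \<odot> grel)"
      using tmult_letter_commute_single[of grel] grel_carrier n
      by (simp add: tmult_assoc[symmetric] monomial_tmult_monomial)
    also have "replicate (e - 2) 0 @ [0::nat] = replicate (Suc e - 2) 0"
    proof -
      have "Suc e - 2 = Suc (e - 2)" using False by arith
      then show ?thesis by (simp add: replicate_append_same)
    qed
    finally show ?thesis using False by auto
  qed
next
  case (level_add e p q)
  then obtain C1 C2 where "p = smult C1 (monomial (replicate (e - 2) 0) \<odot> grel)" "e < 2 \<longrightarrow> C1 = 0"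
    "q = smult C2 (monomial (replicate (e - 2) 0) \<odot> grel)" "e < 2 \<longrightarrow> C2 = 0" by blast
  then show ?case by (intro exI[of _ "C1 + C2"]) (simp add: smult_add_left)
qed (intro exI[of _ 0], simp)

lemma ideal_level_grel_top_zero_single_letter:
  assumes n: "n = 1" and p: "ideal_level n grel e p" and top: "hcomp e p = 0"
  shows "p = 0"
proof -
  obtain C where C: "p = smult C (monomial (replicate (e - 2) 0) \<odot> grel)" "e < 2 \<longrightarrow> C = 0"
    using ideal_level_grel_single_letter[OF n p] by blast
  show ?thesis
  proof (cases "e < 2")
    case False
    then obtain d where d: "e = Suc (Suc d)" by (metis add_2_eq_Suc le_add_diff_inverse not_less)
    have "replicate d 0 \<in> lists {..<n}" using n by auto
    then have hom: "monomial (replicate d 0) \<in> homog n d"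
      using homog_monomial[of "replicate d 0" n] by auto
    obtain m where m: "m < n" "M m 0 \<noteq> 0" using M_column_nonzero by blast
    have frel: "frel = smult (M 0 0) (monomial [0, 0])"
      unfolding frel_def quad_elem_eq using n by (simp add: tmult_smult_left monomial_tmult_monomial)
    have "0 = hcomp e p" using top by simp
    also have "\<dots> = smult C (monomial (replicate d 0) \<odot> frel)"
      using C d by (simp add: hcomp_smult hcomp_tmult_grel[OF hom])
    also have "\<dots> = smult (C * M 0 0) (monomial (replicate d 0 @ [0, 0]))"
      by (simp add: frel tmult_smult_right monomial_tmult_monomial smult_smult mult.commute)
    finally have "C * M 0 0 = 0"
      by (metis smult_monomial_apply zero_fun_apply)
    then show ?thesis using C m n by simp
  qed (use C in simp)
qed

section \<open>Top components of the ideal generated by \<open>g\<close>\<close>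

lemma leading_factor_in_ideal_level:
  assumes n2: "n \<ge> 2" and z: "z \<in> homog n (Suc e)"
    and pk: "\<And>k. k < n \<Longrightarrow> ideal_level n grel (Suc (Suc e)) (pk k)"
    and top: "hcomp (Suc (Suc (Suc e))) (z \<odot> grel + (\<Sum>k<n. pk k \<odot> monomial [k])) = 0"
  shows "ideal_level n frel (Suc e) z"
proof -
  have hcomp_eq: "hcomp (Suc (Suc d)) (y \<odot> grel + (\<Sum>k<n. r k \<odot> monomial [k]))
      = y \<odot> frel + (\<Sum>k<n. hcomp (Suc d) (r k) \<odot> monomial [k])" if "y \<in> homog n d" for y d r
    using that by (simp add: hcomp_add hcomp_sum hcomp_tmult_grel hcomp_tmult_letter)
  obtain x q where x: "x \<in> homog n e" and q: "\<forall>l<n. ideal_level n grel (Suc e) (q l)"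
    and pk0: "pk 0 = x \<odot> grel + (\<Sum>l<n. q l \<odot> monomial [l])"
    using ideal_level_decomp[OF pk[of 0]] n_pos by auto
  define A where "A j = smult (M j 0) z + (\<Sum>i<n. smult (M i j) (x \<odot> monomial [i]))" for j
  have A: "ideal_level n frel (Suc e) (A j)" if j: "j < n" for j
  proof -
    have "rquot j (rquot 0 (z \<odot> frel + (\<Sum>k<n. hcomp (Suc (Suc e)) (pk k) \<odot> monomial [k]))) = 0"
      using top hcomp_eq[OF z] by (simp add: fun_eq_iff zero_fun_apply rquot_apply)
    then have "A j + hcomp (Suc e) (q j) = 0"
      using j n_pos hcomp_eq[OF x, of q] pk0
      by (simp add: A_def rquot_add rquot_tmult_frel rquot_sum_letters rquot_sum rquot_smult
          rquot_tmult_letter sum_eq_single[where a=j] add.assoc)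
    then have "A j = - hcomp (Suc e) (q j)" by (simp add: eq_neg_iff_add_eq_0)
    then show ?thesis using hcomp_ideal_level_grel q j by (simp add: ideal_level_uminus)
  qed
  define Q where "Q l = (\<Sum>j<n. M j 0 * N j l)" for l
  have sys: "ideal_level n frel (Suc e) (smult (Q l) z + x \<odot> monomial [l])" if l: "l < n" for l
  proof -
    have "ideal_level n frel (Suc e) (\<Sum>j<n. smult (N j l) (A j))"
      using A by (auto intro!: ideal_level_sum ideal_level_smult)
    then show ?thesis
      using inverse_matrix_combination[OF l, of "\<lambda>j. M j 0" z x] by (simp add: A_def Q_def)
  qed
  obtain j1 where "j1 < n" "M j1 0 \<noteq> 0" using M_column_nonzero by blast
  then obtain l0 where l0: "l0 < n" "Q l0 \<noteq> 0"
    using row_times_N_nonzero[of j1 "\<lambda>j. M j 0"] by (auto simp: Q_def)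
  show ?thesis
    using letter_system_ideal_level[OF n2 ideal_level_frel_right_cancel[OF n2 x] l0 sys] by simp
qed

lemma ideal_level_grel_2_top_zero:
  assumes p: "ideal_level n grel 2 p" and top: "hcomp 2 p = 0"
  shows "p = 0"
proof -
  obtain z ps where z: "z \<in> homog n 0" and ps: "\<forall>k<n. ideal_level n grel 1 (ps k)"
    and p_eq: "p = z \<odot> grel + (\<Sum>k<n. ps k \<odot> monomial [k])"
    using ideal_level_decomp[OF p] by auto
  have "ps k = 0" if "k < n" for k using ps that by (intro ideal_level_below_2[of n grel 1]) auto
  then have p_eq: "p = z \<odot> grel" using p_eq by simp
  have "z \<odot> frel = 0"
    using top hcomp_tmult_grel[OF z] p_eq by (simp add: numeral_2_eq_2)
  moreover have "z \<odot> frel = smult (z []) frel"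
    by (subst homog_0_eq[OF z]) (simp add: tmult_smult_left)
  ultimately have "z [] = 0"
    using frel_nonzero smult_inverse[of "z []" frel] by force
  then show ?thesis using homog_0_eq[OF z] p_eq by simp
qed

text \<open>The top component of \<open>z g + \<Sum> p\<^sub>k y\<^sub>k\<close> vanishes, so \<open>z\<close> lies in \<open>(f)\<close> and the overlap
  lemma rewrites \<open>z g\<close> into letter form; the coefficients of the letters then have vanishing
  top components one level lower.\<close>

lemma ideal_level_grel_top_zero_step:
  assumes n2: "n \<ge> 2" and p: "ideal_level n grel (Suc (Suc (Suc e))) p"
    and top: "hcomp (Suc (Suc (Suc e))) p = 0"
    and IH: "\<And>q. ideal_level n grel (Suc (Suc e)) q \<Longrightarrow> hcomp (Suc (Suc e)) q = 0 \<Longrightarrow>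
      ideal_upto n grel (Suc e) q"
  shows "ideal_upto n grel (Suc (Suc e)) p"
proof -
  obtain z pk where z: "z \<in> homog n (Suc e)"
    and pk: "\<forall>k<n. ideal_level n grel (Suc (Suc e)) (pk k)"
    and p_eq: "p = z \<odot> grel + (\<Sum>k<n. pk k \<odot> monomial [k])"
    using ideal_level_decomp[OF p] by auto
  have "ideal_level n frel (Suc e) z"
    using top p_eq by (intro leading_factor_in_ideal_level[OF n2 z]) (simp_all add: pk)
  then have "letter_form n grel (Suc (Suc e)) (z \<odot> grel)"
    using ideal_level_frel_overlap[OF _ homog_monomial_Nil] by fastforce
  then obtain ps r where ps: "\<forall>k<n. ideal_level n grel (Suc (Suc e)) (ps k)"
    and r: "ideal_upto n grel (Suc (Suc e)) r" and zg: "z \<odot> grel = (\<Sum>k<n. ps k \<odot> monomial [k]) + r"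
    unfolding letter_form_def by blast
  define P where "P k = ps k + pk k" for k
  have p_eq: "p = (\<Sum>k<n. P k \<odot> monomial [k]) + r"
    using p_eq zg by (simp add: P_def tmult_add_left sum.distrib algebra_simps)
  have "hcomp (Suc (Suc (Suc e))) r = 0"
    using ideal_upto_deg_le[OF r grel_deg_le] by (intro hcomp_deg_gt) auto
  then have top_eq: "hcomp (Suc (Suc (Suc e))) p = (\<Sum>k<n. hcomp (Suc (Suc e)) (P k) \<odot> monomial [k])"
    using p_eq by (simp add: hcomp_add hcomp_sum hcomp_tmult_letter)
  have "ideal_upto n grel (Suc (Suc e)) (P k \<odot> monomial [k])" if k: "k < n" for k
  proof -
    have "hcomp (Suc (Suc e)) (P k) = 0"
      using arg_cong[OF top_eq, of "rquot k"] top k by (simp add: rquot_sum_letters)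
    then have "ideal_upto n grel (Suc e) (P k)"
      using IH ps pk k by (simp add: P_def level_add)
    then show ?thesis using ideal_upto_homog_right[OF _ homog_letter[OF k]] by simp
  qed
  then have "ideal_upto n grel (Suc (Suc e)) (\<Sum>k<n. P k \<odot> monomial [k])"
    by (intro ideal_upto_sum) auto
  then show ?thesis using p_eq r by (simp add: upto_add)
qed

text \<open>The PBW condition: an element of level \<open>e\<close> of the ideal of \<open>g\<close> whose top component
  vanishes already lies in the levels below \<open>e\<close>.\<close>

lemma ideal_level_grel_top_zero:
  "ideal_level n grel e p \<Longrightarrow> hcomp e p = 0 \<Longrightarrow> ideal_upto n grel (e - 1) p"
proof (induction e arbitrary: p rule: less_induct)
  case (less e p)
  have "e < 2 \<or> e = 2 \<or> e = Suc (Suc (Suc (e - 3)))" by arith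
  then consider "e < 2 \<or> e = 2 \<or> n = 1" | e' where "e = Suc (Suc (Suc e'))" "n \<ge> 2"
    using n_pos by fastforce
  then show ?case
  proof cases
    case 1
    then have "p = 0"
      using ideal_level_below_2 ideal_level_grel_2_top_zero ideal_level_grel_top_zero_single_letter
        less.prems by blast
    then show ?thesis by (simp add: ideal_upto_zero)
  next
    case (2 e')
    then show ?thesis
      using ideal_level_grel_top_zero_step less.prems less.IH[of "Suc (Suc e')"] by simp
  qed
qed

lemma hcomp_ideal_upto_grel_above:
  "ideal_upto n grel e h \<Longrightarrow> e \<le> d \<Longrightarrow> ideal_level n frel d (hcomp d h)"
proof (induction rule: ideal_upto.induct)
  case (upto_level d' p e)
  show ?case
  proof (cases "d' = d")
    case True
    then show ?thesis using hcomp_ideal_level_grel[OF upto_level(1)] by simp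
  next
    case False
    then have "hcomp d p = 0"
      using upto_level ideal_level_deg_le[OF _ grel_deg_le] by (intro hcomp_deg_gt) auto
    then show ?thesis by (simp add: level_zero)
  qed
qed (simp add: hcomp_add level_add)

lemma hcomp_ideal_upto_grel:
  "ideal_upto n grel e h \<Longrightarrow> deg_le d h \<Longrightarrow> ideal_level n frel d (hcomp d h)"
proof (induction e arbitrary: h)
  case 0
  then show ?case using hcomp_ideal_upto_grel_above by blast
next
  case (Suc e)
  show ?case
  proof (cases "Suc e \<le> d")
    case True
    then show ?thesis using hcomp_ideal_upto_grel_above Suc.prems(1) by blast
  next
    case False
    obtain p q where pq: "ideal_level n grel (Suc e) p" "ideal_upto n grel e q" "h = p + q"
      using ideal_upto_Suc_split[OF Suc.prems(1)] by blast
    have "hcomp (Suc e) h = 0" using Suc.prems(2) False by (intro hcomp_deg_gt) auto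
    moreover have "hcomp (Suc e) q = 0"
      using ideal_upto_deg_le[OF pq(2) grel_deg_le] by (intro hcomp_deg_gt) auto
    ultimately have "hcomp (Suc e) p = 0" using pq(3) by (simp add: hcomp_add)
    then have "ideal_upto n grel e h"
      using ideal_level_grel_top_zero[OF pq(1)] pq by (simp add: upto_add)
    then show ?thesis using Suc.IH Suc.prems(2) by blast
  qed
qed

section \<open>The isomorphism \<open>T(V)/(f) \<cong> gr U\<close>\<close>

abbreviation TA where "TA \<equiv> tensor_algebra n :: 'k tens ring"
abbreviation If where "If \<equiv> genideal TA {frel}"
abbreviation Ig where "Ig \<equiv> genideal TA {grel}"

lemma ideal_genideal: "r \<in> tens_carrier n \<Longrightarrow> ideal (genideal TA {r}) TA"
  using ring.genideal_ideal[OF ring_tensor_algebra, of "{r}" n] by simp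

lemma ideal_If: "ideal If TA"
  using ideal_genideal[OF frel_carrier] .

lemma ideal_Ig: "ideal Ig TA"
  using ideal_genideal[OF grel_carrier] .

lemma hcomp_If: "p \<in> If \<Longrightarrow> ideal_level n frel d (hcomp d p)"
  using genideal_eq_ideal_upto[OF frel_carrier] hcomp_ideal_upto_homog[OF frel_homog] by blast

lemma hcomp_Ig: "h \<in> Ig \<Longrightarrow> deg_le d h \<Longrightarrow> ideal_level n frel d (hcomp d h)"
  using genideal_eq_ideal_upto[OF grel_carrier] hcomp_ideal_upto_grel by blast

lemma ideal_level_in_genideal: "r \<in> tens_carrier n \<Longrightarrow> ideal_level n r d p \<Longrightarrow> p \<in> genideal TA {r}"
  using ideal_upto_in_genideal[OF ideal_level_imp_upto] by blast

lemma ideal_level_frel_in_lower: "ideal_level n frel m p \<Longrightarrow> p \<in> lower n Ig m"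
proof -
  assume p: "ideal_level n frel m p"
  obtain q where q: "ideal_level n grel m q" "hcomp m q = p" using ideal_level_frel_lift[OF p] by blast
  show ?thesis
  proof (cases m)
    case 0
    then show ?thesis using ideal_level_below_2[OF p] lower_zero[OF ideal_Ig] by simp
  next
    case (Suc m')
    have "p - q = - (q - hcomp m q)" using q(2) by simp
    moreover have "q - hcomp m q \<in> filt n m'"
      using deg_le_diff_hcomp ideal_level_deg_le[OF q(1) grel_deg_le] Suc
        ideal_level_carrier[OF q(1) grel_carrier] by (auto simp: filt_eq)
    ultimately have "p - q \<in> lower n Ig m"
      using Suc filt_in_lower_Suc[OF ideal_Ig] lower_uminus[OF ideal_Ig] by metis
    moreover have "q \<in> lower n Ig m"
      by (rule ideal_in_lower[OF ideal_Ig ideal_level_in_genideal[OF grel_carrier q(1)]])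
    ultimately show ?thesis using lower_add[OF ideal_Ig] by fastforce
  qed
qed

lemma hcomp_lower_in_If: "x \<in> filt n m \<Longrightarrow> x \<in> lower n Ig m \<Longrightarrow> hcomp m x \<in> If"
proof (cases m)
  case 0
  assume "x \<in> filt n m" "x \<in> lower n Ig m"
  then show ?thesis using 0 hcomp_Ig ideal_level_in_genideal[OF frel_carrier]
    by (auto simp: lower_0[OF ideal_Ig] filt_eq)
next
  case (Suc m')
  assume x: "x \<in> filt n m" "x \<in> lower n Ig m"
  then obtain u v where uv: "u \<in> filt n m'" "v \<in> Ig" "x = u + v"
    using Suc lower_Suc_iff[OF ideal_Ig] by blast
  have "v = x - u" using uv(3) by simp
  moreover have "deg_le m x" "deg_le m u" using x(1) uv(1) Suc by (auto simp: filt_eq intro: deg_le_mono)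
  ultimately have "deg_le m v" by (simp add: deg_le_diff)
  then have "ideal_level n frel m (hcomp m v)" using hcomp_Ig uv(2) by blast
  moreover have "hcomp m u = 0" using uv(1) Suc by (intro hcomp_deg_gt) (auto simp: filt_eq)
  ultimately show ?thesis
    using uv(3) ideal_level_in_genideal[OF frel_carrier] by (simp add: hcomp_add)
qed

lemma gr_map_eq_iff:
  assumes "p \<in> tens_carrier n" "q \<in> tens_carrier n"
  shows "gr_map n Ig p = gr_map n Ig q \<longleftrightarrow> p - q \<in> If"
proof
  assume "p - q \<in> If"
  then have "hcomp m (p - q) \<in> lower n Ig m" for m
    using ideal_level_frel_in_lower hcomp_If by blast
  then have "hcomp m p - hcomp m q \<in> lower n Ig m" for m
    by (simp add: hcomp_diff)
  then show "gr_map n Ig p = gr_map n Ig q"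
    by (simp add: fun_eq_iff gr_map_def gcoset_eq_iff[OF ideal_Ig])
next
  assume eq: "gr_map n Ig p = gr_map n Ig q"
  have pq: "p - q \<in> tens_carrier n" using assms by blast
  have "hcomp m (p - q) \<in> If" for m
    using eq hcomp_lower_in_If[OF hcomp_filt[OF pq]] gcoset_eq_iff[OF ideal_Ig]
    by (simp add: fun_eq_iff gr_map_def hcomp_diff hcomp_hcomp)
  moreover obtain B where "deg_le B (p - q)" using tens_carrier_deg_le[OF pq] by blast
  ultimately show "p - q \<in> If"
    using sum_hcomp tens_ideal_sum[OF ideal_If] by metis
qed

definition gr_iso :: "'k tens set \<Rightarrow> nat \<Rightarrow> 'k tens set" where
  "gr_iso X = gr_map n Ig (SOME p. p \<in> tens_carrier n \<and> X = If +>\<^bsub>TA\<^esub> p)"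

lemma quotient_carrier: "carrier (TA Quot If) = (\<lambda>p. If +>\<^bsub>TA\<^esub> p) ` tens_carrier n"
  by (auto simp add: FactRing_def A_RCOSETS_def')

lemma coset_eq_iff:
  assumes "p \<in> tens_carrier n" "q \<in> tens_carrier n"
  shows "If +>\<^bsub>TA\<^esub> p = If +>\<^bsub>TA\<^esub> q \<longleftrightarrow> p - q \<in> If"
  using ring.quotient_eq_iff_same_a_r_cos[OF ring_tensor_algebra ideal_If, of p q] assms
    tensor_algebra_a_minus[OF assms] by simp

lemma gr_iso_coset: "p \<in> tens_carrier n \<Longrightarrow> gr_iso (If +>\<^bsub>TA\<^esub> p) = gr_map n Ig p"
  unfolding gr_iso_def
  by (rule someI2[of _ p])
    (auto simp: coset_eq_iff gr_map_eq_iff intro: tens_ideal_diff_commute[OF ideal_If])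

lemma coset_ring_hom: "(\<lambda>p. If +>\<^bsub>TA\<^esub> p) \<in> ring_hom TA (TA Quot If)"
  using ideal.rcos_ring_hom[OF ideal_If] by simp

lemma gr_iso_ring_hom: "gr_iso \<in> ring_hom (TA Quot If) (assoc_graded n Ig)"
proof (rule ring_hom_memI)
  fix X assume "X \<in> carrier (TA Quot If)"
  then show "gr_iso X \<in> carrier (assoc_graded n Ig)"
    using gr_iso_coset gr_map_carrier[OF ideal_Ig] quotient_carrier by auto
next
  fix X Y assume "X \<in> carrier (TA Quot If)" "Y \<in> carrier (TA Quot If)"
  then obtain p q where p: "p \<in> tens_carrier n" "X = If +>\<^bsub>TA\<^esub> p"
    and q: "q \<in> tens_carrier n" "Y = If +>\<^bsub>TA\<^esub> q"
    using quotient_carrier by auto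
  show "gr_iso (X \<otimes>\<^bsub>TA Quot If\<^esub> Y) = gr_iso X \<otimes>\<^bsub>assoc_graded n Ig\<^esub> gr_iso Y"
    using p q ring_hom_mult[OF coset_ring_hom, of p q, symmetric]
    by (simp add: gr_iso_coset tens_carrier_tmult gr_map_mult[OF ideal_Ig])
  show "gr_iso (X \<oplus>\<^bsub>TA Quot If\<^esub> Y) = gr_iso X \<oplus>\<^bsub>assoc_graded n Ig\<^esub> gr_iso Y"
    using p q ring_hom_add[OF coset_ring_hom, of p q, symmetric]
    by (simp add: gr_iso_coset tens_carrier_add gr_map_add[OF ideal_Ig])
next
  show "gr_iso \<one>\<^bsub>TA Quot If\<^esub> = \<one>\<^bsub>assoc_graded n Ig\<^esub>"
    using ring_hom_one[OF coset_ring_hom] gr_iso_coset[OF tens_carrier_monomial[of "[]" n]]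
    by (simp add: gr_map_one[OF ideal_Ig])
qed

lemma gr_iso_bij: "bij_betw gr_iso (carrier (TA Quot If)) (carrier (assoc_graded n Ig))"
proof (rule bij_betw_imageI)
  show "inj_on gr_iso (carrier (TA Quot If))"
    by (auto simp: inj_on_def quotient_carrier gr_iso_coset gr_map_eq_iff coset_eq_iff)
  show "gr_iso ` carrier (TA Quot If) = carrier (assoc_graded n Ig)"
  proof
    show "gr_iso ` carrier (TA Quot If) \<subseteq> carrier (assoc_graded n Ig)"
      using ring_hom_closed[OF gr_iso_ring_hom] by blast
    show "carrier (assoc_graded n Ig) \<subseteq> gr_iso ` carrier (TA Quot If)"
    proof
      fix d assume "d \<in> carrier (assoc_graded n Ig)"
      then obtain p :: "'k tens" where "p \<in> tens_carrier n" "gr_map n Ig p = d"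
        by (rule gr_map_surj[OF ideal_Ig])
      then show "d \<in> gr_iso ` carrier (TA Quot If)"
        by (auto simp: quotient_carrier gr_iso_coset intro!: image_eqI)
    qed
  qed
qed

lemma gr_iso_degree: "gr_iso ` {If +>\<^bsub>TA\<^esub> p | p. p \<in> homog n m} = gr_degree n Ig m"
proof
  show "gr_iso ` {If +>\<^bsub>TA\<^esub> p | p. p \<in> homog n m} \<subseteq> gr_degree n Ig m"
  proof clarify
    fix p :: "'k tens" assume p: "p \<in> homog n m"
    have "gr_map n Ig p j = lower n Ig j" if "j \<noteq> m" for j
      using hcomp_homogeneous_other[OF homog_homogeneous[OF p] that[symmetric]]
      by (rule gr_map_eq_lower[OF ideal_Ig])
    then show "gr_iso (If +>\<^bsub>TA\<^esub> p) \<in> gr_degree n Ig m"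
      using homog_carrier[OF p] gr_map_carrier[OF ideal_Ig] by (simp add: gr_iso_coset gr_degree_def)
  qed
  show "gr_degree n Ig m \<subseteq> gr_iso ` {If +>\<^bsub>TA\<^esub> p | p. p \<in> homog n m}"
  proof
    fix d assume "d \<in> gr_degree n Ig m"
    then have "d \<in> carrier (assoc_graded n Ig)" "\<forall>j. j \<noteq> m \<longrightarrow> d j = lower n Ig j"
      by (auto simp: gr_degree_def)
    then obtain p :: "'k tens" where p: "gr_map n Ig p = d" "p \<in> homog n m"
      using gr_map_surj[OF ideal_Ig] by metis
    then have "d = gr_iso (If +>\<^bsub>TA\<^esub> p)" using gr_iso_coset[OF homog_carrier] by simp
    then show "d \<in> gr_iso ` {If +>\<^bsub>TA\<^esub> p | p. p \<in> homog n m}" using p(2) by blast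
  qed
qed

theorem PBW_deformation_grel: "PBW_deformation n grel frel"
  unfolding PBW_deformation_def Let_def
proof (intro exI conjI allI)
  show "gr_iso \<in> ring_iso (TA Quot If) (assoc_graded n Ig)"
    unfolding ring_iso_def using gr_iso_ring_hom gr_iso_bij by blast
  show "gr_iso (If +>\<^bsub>TA\<^esub> tens_const c) = gr_scalar n Ig c" for c
    using gr_iso_coset[OF tens_carrier_const] gr_map_const[OF ideal_Ig] by simp
  show "gr_iso ` {If +>\<^bsub>TA\<^esub> p | p. p \<in> homog n m} = gr_degree n Ig m" for m
    by (rule gr_iso_degree)
qed

end

theorem proposition3p2:
  fixes n :: nat and M :: "nat \<Rightarrow> nat \<Rightarrow> 'k::field_char_0"
    and a :: "nat \<Rightarrow> 'k" and c :: 'k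
  assumes "n \<ge> 1"
    and "invertible_mat n M"
  shows "PBW_deformation n
           (\<lambda>w. quad_elem n M w - lin_elem n a w - tens_const c w)
           (quad_elem n M)"
proof -
  obtain N where N: "\<forall>i<n. \<forall>k<n. (\<Sum>j<n. M i j * N j k) = (if i = k then 1 else 0) \<and>
      (\<Sum>j<n. N i j * M j k) = (if i = k then 1 else 0)"
    using assms(2) unfolding invertible_mat_def by blast
  let ?l = "lin_elem n a + tens_const c"
  have "?l \<in> tens_carrier n"
    using homog_carrier[OF homog_lin_comb] by (auto simp: lin_elem_eq)
  moreover have "deg_le 1 ?l"
    using homogeneous_imp_deg_le[OF homog_homogeneous[OF homog_lin_comb]]
    by (intro deg_le_add) (auto simp: lin_elem_eq deg_le_def tens_const_def)
  ultimately interpret pbw_data n M N ?l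
    using assms(1) N by unfold_locales auto
  have "(\<lambda>w. quad_elem n M w - lin_elem n a w - tens_const c w) = grel"
    by (simp add: fun_eq_iff grel_def frel_def minus_apply plus_fun_apply)
  then show ?thesis using PBW_deformation_grel by (simp add: frel_def)
qed

end
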